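(* Let $\mathcal{G}$ be a parity game with a nonempty vertex set and let $T$ be a finite set of tangles of $\mathcal{G}$. Then $\mathtt{search}(\mathcal{G},T)$ (defined in the context) terminates and returns a pair $(T'',t)$ where $t$ is a tangle that is a dominion of $\mathcal{G}$ for the player $\alpha\equiv\mathrm{pr}(t)\pmod 2$.
   Context: Parity games: $\mathcal{G}=(V_0,V_1,E,\mathrm{pr})$, $V=V_0\cup V_1$ finite, partitioned into vertices of Even ($0$) and Odd ($1$); $E\subseteq V\times V$ with every vertex having a successor; $\mathrm{pr}:V\to\{0,\dots,d\}$. $E(u)=\{v:(u,v)\in E\}$, $\mathrm{pr}(U)=\max_{u\in U}\mathrm{pr}(u)$, $\mathrm{pr}^{-1}(p)$ the set of vertices of priority $p$, $\overline{\alpha}=1-\alpha$. A play (infinite path) is won by Even iff the highest priority occurring infinitely often is even, otherwise by Odd; a cycle is won by $\alpha$ if its highest priority has parity $\alpha$. A strategy of $\alpha$ is a partial function $\sigma$ on $V_\alpha$ with $\sigma(v)\in E(v)$; a play is consistent with $\sigma$ if every vertex $v\in\mathrm{dom}(\sigma)$ on it is followed by $\sigma(v)$. A dominion of $\alpha$ is a set $D$ for which $\alpha$ has a strategy $\sigma$ such that all plays starting in $D$ consistent with $\sigma$ stay in $D$ and are won by $\alpha$. For $U\subseteq V$, $\mathcal{G}\cap U$ is the subgame with vertices $V\cap U$ and edges $E\cap(U\times U)$, and $\mathcal{G}\setminus U=\mathcal{G}\cap(V\setminus U)$. A $p$-tangle is a nonempty $U\subseteq V$ with $p=\mathrm{pr}(U)$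 such that for $\alpha\equiv p\pmod 2$ there is a strategy $\sigma:U\cap V_\alpha\to U$ (witness strategy $\sigma_T(U)$) with $(U,E\cap(\sigma\cup((U\cap V_{\overline{\alpha}})\times U)))$ strongly connected and all its cycles won by $\alpha$ ("won by $\alpha$"). For a tangle $t$ won by $\alpha$ in a game with edge set $E$, $E_T(t)=\{v\notin t:\exists u\in t\cap V_{\overline{\alpha}},(u,v)\in E\}$. $T_\alpha$ denotes the tangles of $T$ won by $\alpha$; for a subgame $\mathcal{G}'$, $T\cap\mathcal{G}'$ denotes the tangles of $T$ contained in its vertex set. Tangle attractor: for a game $\mathcal{G}$ with vertices $V$, tangles $T$, player $\alpha$ and $A\subseteq V$, $\mathit{TAttr}^{\mathcal{G},T}_\alpha(A)$ is the least $Z\supseteq A$ containing every $v\in V_\alpha$ with $E(v)\cap Z\neq\emptyset$, every $v\in V_{\overline{\alpha}}$ with $E(v)\subseteq Z$, and every vertex of every $t\in T_\alpha$ with $\emptyset\neq E_T(t)\subseteq Z$ ($E_T$ computed in $\mathcal{G}$). It is computed iteratively together with a strategy $\sigma$ of $\alpha$ (initially empty): when an $\alpha$-vertex is added individually, $\sigma$ maps it to a successor already in $Z$; each $\alpha$-vertex of $A$ gets as $\sigma$-value a successor in $Z$ once one exists; when the vertices of a tangle $t$ are added, $\sigma(u):=\sigma_T(t)(u)$ for every $\alpha$-vertex $u\in t$ not yet in $\mathrm{dom}(\sigma)$. extract-tangles$(Z,\sigma)$, for a subgame $\mathcal{G}'=(V',E')$ with top priority $p$, $\alpha\equiv p$,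 region $Z\subseteq V'$ and strategy $\sigma$: let $Y_Z$ be the greatest $X\subseteq Z$ such that every $v\in X\cap V_{\overline{\alpha}}$ has $E'(v)\subseteq X$ and every $v\in X\cap V_\alpha$ has $\sigma(v)\in X$; let $H$ be the graph on $Y_Z$ with edges $(v,\sigma(v))$ for $v\in Y_Z\cap V_\alpha$ and $(v,w)\in E'$ for $v\in Y_Z\cap V_{\overline{\alpha}}$; return all bottom strongly connected components of $H$ that contain at least one edge of $H$, each with witness strategy $\sigma$ restricted to it. $\mathtt{search}(\mathcal{G},T)$: repeat forever: set $r:=\emptyset$ (a partial function $V\to\mathbb{N}$, the region function) and $Y:=\emptyset$; while $V\setminus\mathrm{dom}(r)\neq\emptyset$: let $\mathcal{G}':=\mathcal{G}\setminus\mathrm{dom}(r)$ with vertex set $V'$, $T':=T\cap\mathcal{G}'$, $p:=\mathrm{pr}(\mathcal{G}')$, $\alpha:=p\bmod 2$; compute $(Z,\sigma):=\mathit{TAttr}^{\mathcal{G}',T'}_\alpha(\mathrm{pr}^{-1}(p)\cap V')$ (the region of priority $p$); let $A:=$ extract-tangles$(Z,\sigma)$; if some $t\in A$ has $E_T(t)=\emptyset$ with $E_T$ computed in the full game $\mathcal{G}$, return $(T\cup Y,t)$; otherwise set $r(v):=p$ for all $v\in Z$ and $Y:=Y\cup A$. After the while-loop, set $T:=T\cup Y$. *)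

theory Defs
  imports Main "HOL-Library.Infinite_Set"
begin

text \<open>Players are encoded as the natural numbers 0 (Even) and 1 (Odd).\<close>

definition parity_game :: "'v set \<Rightarrow> 'v set \<Rightarrow> ('v \<times> 'v) set \<Rightarrow> ('v \<Rightarrow> nat) \<Rightarrow> bool" where
  "parity_game V V0 E pr \<longleftrightarrow> finite V \<and> V0 \<subseteq> V \<and> E \<subseteq> V \<times> V \<and> (\<forall>v\<in>V. \<exists>w. (v, w) \<in> E)"

definition player_vs :: "'v set \<Rightarrow> 'v set \<Rightarrow> nat \<Rightarrow> 'v set" where
  "player_vs V V0 \<alpha> = (if \<alpha> = 0 then V \<inter> V0 else V - V0)"

definition strategy :: "'v set \<Rightarrow> 'v set \<Rightarrow> ('v \<times> 'v) set \<Rightarrow> nat \<Rightarrow> ('v \<rightharpoonup> 'v) \<Rightarrow> bool" where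
  "strategy V V0 E \<alpha> \<sigma> \<longleftrightarrow> dom \<sigma> \<subseteq> player_vs V V0 \<alpha> \<and> (\<forall>v w. \<sigma> v = Some w \<longrightarrow> (v, w) \<in> E)"

definition play :: "'v set \<Rightarrow> ('v \<times> 'v) set \<Rightarrow> (nat \<Rightarrow> 'v) \<Rightarrow> bool" where
  "play V E \<pi> \<longleftrightarrow> (\<forall>i. \<pi> i \<in> V \<and> (\<pi> i, \<pi> (Suc i)) \<in> E)"

definition consistent :: "('v \<rightharpoonup> 'v) \<Rightarrow> (nat \<Rightarrow> 'v) \<Rightarrow> bool" where
  "consistent \<sigma> \<pi> \<longleftrightarrow> (\<forall>i. \<pi> i \<in> dom \<sigma> \<longrightarrow> \<sigma> (\<pi> i) = Some (\<pi> (Suc i)))"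

definition wins_play :: "('v \<Rightarrow> nat) \<Rightarrow> nat \<Rightarrow> (nat \<Rightarrow> 'v) \<Rightarrow> bool" where
  "wins_play pr \<alpha> \<pi> \<longleftrightarrow> Max {p. \<exists>\<^sub>\<infinity> i. pr (\<pi> i) = p} mod 2 = \<alpha>"

definition dominion :: "'v set \<Rightarrow> 'v set \<Rightarrow> ('v \<times> 'v) set \<Rightarrow> ('v \<Rightarrow> nat) \<Rightarrow> nat \<Rightarrow> 'v set \<Rightarrow> bool" where
  "dominion V V0 E pr \<alpha> D \<longleftrightarrow>
     (\<exists>\<sigma>. strategy V V0 E \<alpha> \<sigma> \<and>
        (\<forall>\<pi>. play V E \<pi> \<and> \<pi> 0 \<in> D \<and> consistent \<sigma> \<pi> \<longrightarrow> (\<forall>i. \<pi> i \<in> D) \<and> wins_play pr \<alpha> \<pi>))"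

definition tangle_graph :: "'v set \<Rightarrow> 'v set \<Rightarrow> ('v \<times> 'v) set \<Rightarrow> nat \<Rightarrow> 'v set \<Rightarrow> ('v \<rightharpoonup> 'v) \<Rightarrow> ('v \<times> 'v) set" where
  "tangle_graph V V0 E \<alpha> U \<sigma> =
     {(u, w). (u, w) \<in> E \<and> u \<in> U \<and> \<sigma> u = Some w} \<union>
     {(u, w). (u, w) \<in> E \<and> u \<in> U \<inter> player_vs V V0 (1 - \<alpha>) \<and> w \<in> U}"

definition cycles_won :: "('v \<Rightarrow> nat) \<Rightarrow> nat \<Rightarrow> ('v \<times> 'v) set \<Rightarrow> bool" where
  "cycles_won pr \<alpha> H \<longleftrightarrow>
     (\<forall>c. c \<noteq> [] \<and> (\<forall>i<length c. (c ! i, c ! (Suc i mod length c)) \<in> H) \<longrightarrow>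
          Max (pr ` set c) mod 2 = \<alpha>)"

definition tangle_witness :: "'v set \<Rightarrow> 'v set \<Rightarrow> ('v \<times> 'v) set \<Rightarrow> ('v \<Rightarrow> nat) \<Rightarrow> 'v set \<Rightarrow> ('v \<rightharpoonup> 'v) \<Rightarrow> bool" where
  "tangle_witness V V0 E pr U \<sigma> \<longleftrightarrow>
     U \<noteq> {} \<and> U \<subseteq> V \<and>
     (let \<alpha> = Max (pr ` U) mod 2 in
        strategy V V0 E \<alpha> \<sigma> \<and> dom \<sigma> = U \<inter> player_vs V V0 \<alpha> \<and> ran \<sigma> \<subseteq> U \<and>
        (\<forall>u\<in>U. \<forall>w\<in>U. (u, w) \<in> (tangle_graph V V0 E \<alpha> U \<sigma>)\<^sup>*) \<and>
        cycles_won pr \<alpha> (tangle_graph V V0 E \<alpha> U \<sigma>))"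

definition is_tangle :: "'v set \<Rightarrow> 'v set \<Rightarrow> ('v \<times> 'v) set \<Rightarrow> ('v \<Rightarrow> nat) \<Rightarrow> 'v set \<Rightarrow> bool" where
  "is_tangle V V0 E pr U \<longleftrightarrow> (\<exists>\<sigma>. tangle_witness V V0 E pr U \<sigma>)"

definition tangle_escapes :: "'v set \<Rightarrow> 'v set \<Rightarrow> ('v \<times> 'v) set \<Rightarrow> ('v \<Rightarrow> nat) \<Rightarrow> 'v set \<Rightarrow> 'v set" where
  "tangle_escapes V V0 E pr t =
     {v. v \<notin> t \<and> (\<exists>u \<in> t \<inter> player_vs V V0 (1 - Max (pr ` t) mod 2). (u, v) \<in> E)}"

text \<open>Tangles are represented together with their witness strategies as pairs.\<close>

definition attr_pending :: "'v set \<Rightarrow> 'v set \<Rightarrow> ('v \<times> 'v) set \<Rightarrow> nat \<Rightarrow> 'v set \<Rightarrow> 'v set \<Rightarrow> ('v \<rightharpoonup> 'v) \<Rightarrow> bool" where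
  "attr_pending V V0 E \<alpha> A Z \<sigma> \<longleftrightarrow>
     (\<exists>a \<in> A \<inter> player_vs V V0 \<alpha>. a \<notin> dom \<sigma> \<and> (\<exists>w\<in>Z. (a, w) \<in> E))"

inductive attr_step :: "'v set \<Rightarrow> 'v set \<Rightarrow> ('v \<times> 'v) set \<Rightarrow> ('v \<Rightarrow> nat) \<Rightarrow>
    ('v set \<times> ('v \<rightharpoonup> 'v)) set \<Rightarrow> nat \<Rightarrow> 'v set \<Rightarrow>
    'v set \<times> ('v \<rightharpoonup> 'v) \<Rightarrow> 'v set \<times> ('v \<rightharpoonup> 'v) \<Rightarrow> bool"
  for V V0 E pr T \<alpha> A where
  target_strat:
    "\<lbrakk> a \<in> A \<inter> player_vs V V0 \<alpha>; a \<notin> dom \<sigma>; (a, w) \<in> E; w \<in> Z \<rbrakk>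
     \<Longrightarrow> attr_step V V0 E pr T \<alpha> A (Z, \<sigma>) (Z, \<sigma>(a \<mapsto> w))"
| add_own:
    "\<lbrakk> \<not> attr_pending V V0 E \<alpha> A Z \<sigma>; v \<in> player_vs V V0 \<alpha>; v \<notin> Z; (v, w) \<in> E; w \<in> Z \<rbrakk>
     \<Longrightarrow> attr_step V V0 E pr T \<alpha> A (Z, \<sigma>) (insert v Z, \<sigma>(v \<mapsto> w))"
| add_opp:
    "\<lbrakk> \<not> attr_pending V V0 E \<alpha> A Z \<sigma>; v \<in> player_vs V V0 (1 - \<alpha>); v \<notin> Z;
       \<forall>w. (v, w) \<in> E \<longrightarrow> w \<in> Z \<rbrakk>
     \<Longrightarrow> attr_step V V0 E pr T \<alpha> A (Z, \<sigma>) (insert v Z, \<sigma>)"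
| add_tangle:
    "\<lbrakk> \<not> attr_pending V V0 E \<alpha> A Z \<sigma>; (t, \<tau>) \<in> T; Max (pr ` t) mod 2 = \<alpha>; \<not> t \<subseteq> Z;
       tangle_escapes V V0 E pr t \<noteq> {}; tangle_escapes V V0 E pr t \<subseteq> Z \<rbrakk>
     \<Longrightarrow> attr_step V V0 E pr T \<alpha> A (Z, \<sigma>)
           (Z \<union> t, \<lambda>u. if u \<in> t \<inter> player_vs V V0 \<alpha> \<and> u \<notin> dom \<sigma> then \<tau> u else \<sigma> u)"

definition extract_Y :: "'v set \<Rightarrow> 'v set \<Rightarrow> ('v \<times> 'v) set \<Rightarrow> nat \<Rightarrow> 'v set \<Rightarrow> ('v \<rightharpoonup> 'v) \<Rightarrow> 'v set" where
  "extract_Y V V0 E \<alpha> Z \<sigma> =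
     gfp (\<lambda>X. {v \<in> Z. (v \<in> player_vs V V0 (1 - \<alpha>) \<longrightarrow> (\<forall>w. (v, w) \<in> E \<longrightarrow> w \<in> X)) \<and>
                      (v \<in> player_vs V V0 \<alpha> \<longrightarrow> (\<exists>w\<in>X. \<sigma> v = Some w))})"

definition extract_graph :: "'v set \<Rightarrow> 'v set \<Rightarrow> ('v \<times> 'v) set \<Rightarrow> nat \<Rightarrow> 'v set \<Rightarrow> ('v \<rightharpoonup> 'v) \<Rightarrow> ('v \<times> 'v) set" where
  "extract_graph V V0 E \<alpha> Z \<sigma> =
     {(v, w). v \<in> extract_Y V V0 E \<alpha> Z \<sigma> \<inter> player_vs V V0 \<alpha> \<and> \<sigma> v = Some w} \<union>
     {(v, w). (v, w) \<in> E \<and> v \<in> extract_Y V V0 E \<alpha> Z \<sigma> \<inter> player_vs V V0 (1 - \<alpha>)}"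

definition extract_tangles :: "'v set \<Rightarrow> 'v set \<Rightarrow> ('v \<times> 'v) set \<Rightarrow> nat \<Rightarrow> 'v set \<Rightarrow> ('v \<rightharpoonup> 'v) \<Rightarrow> ('v set \<times> ('v \<rightharpoonup> 'v)) set" where
  "extract_tangles V V0 E \<alpha> Z \<sigma> =
     (let H = extract_graph V V0 E \<alpha> Z \<sigma> in
      {(C, \<sigma> |` C) | C. \<exists>u \<in> extract_Y V V0 E \<alpha> Z \<sigma>.
           C = {w. (u, w) \<in> H\<^sup>* \<and> (w, u) \<in> H\<^sup>*} \<and>
           (\<forall>v w. (v, w) \<in> H \<longrightarrow> v \<in> C \<longrightarrow> w \<in> C) \<and>
           (\<exists>v\<in>C. \<exists>w\<in>C. (v, w) \<in> H)})"

datatype 'v search_state =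
    Loop "('v set \<times> ('v \<rightharpoonup> 'v)) set" "'v \<rightharpoonup> nat" "('v set \<times> ('v \<rightharpoonup> 'v)) set"
      \<comment> \<open>T, region function r, Y: at the test of the inner while loop\<close>
  | Attr "('v set \<times> ('v \<rightharpoonup> 'v)) set" "'v \<rightharpoonup> nat" "('v set \<times> ('v \<rightharpoonup> 'v)) set" "'v set" "'v \<rightharpoonup> 'v"
  | Return "('v set \<times> ('v \<rightharpoonup> 'v)) set" "'v set \<times> ('v \<rightharpoonup> 'v)"

definition sub_V :: "'v set \<Rightarrow> ('v \<rightharpoonup> nat) \<Rightarrow> 'v set" where
  "sub_V V r = V - dom r"

definition sub_E :: "'v set \<Rightarrow> ('v \<times> 'v) set \<Rightarrow> ('v \<rightharpoonup> nat) \<Rightarrow> ('v \<times> 'v) set" where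
  "sub_E V E r = E \<inter> (sub_V V r \<times> sub_V V r)"

definition sub_T :: "'v set \<Rightarrow> ('v set \<times> ('v \<rightharpoonup> 'v)) set \<Rightarrow> ('v \<rightharpoonup> nat) \<Rightarrow> ('v set \<times> ('v \<rightharpoonup> 'v)) set" where
  "sub_T V T r = {t \<in> T. fst t \<subseteq> sub_V V r}"

definition sub_top :: "'v set \<Rightarrow> ('v \<Rightarrow> nat) \<Rightarrow> ('v \<rightharpoonup> nat) \<Rightarrow> nat" where
  "sub_top V pr r = Max (pr ` sub_V V r)"

definition sub_target :: "'v set \<Rightarrow> ('v \<Rightarrow> nat) \<Rightarrow> ('v \<rightharpoonup> nat) \<Rightarrow> 'v set" where
  "sub_target V pr r = {v \<in> sub_V V r. pr v = sub_top V pr r}"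

inductive search_step :: "'v set \<Rightarrow> 'v set \<Rightarrow> ('v \<times> 'v) set \<Rightarrow> ('v \<Rightarrow> nat) \<Rightarrow>
    'v search_state \<Rightarrow> 'v search_state \<Rightarrow> bool"
  for V V0 E pr where
  loop_enter:
    "sub_V V r \<noteq> {} \<Longrightarrow>
     search_step V V0 E pr (Loop T r Y) (Attr T r Y (sub_target V pr r) Map.empty)"
| loop_done:
    "sub_V V r = {} \<Longrightarrow>
     search_step V V0 E pr (Loop T r Y) (Loop (T \<union> Y) Map.empty {})"
| attr:
    "attr_step (sub_V V r) V0 (sub_E V E r) pr (sub_T V T r) (sub_top V pr r mod 2)
        (sub_target V pr r) (Z, \<sigma>) (Z', \<sigma>') \<Longrightarrow>
     search_step V V0 E pr (Attr T r Y Z \<sigma>) (Attr T r Y Z' \<sigma>')"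
| attr_return:
    "\<lbrakk> \<forall>s'. \<not> attr_step (sub_V V r) V0 (sub_E V E r) pr (sub_T V T r) (sub_top V pr r mod 2)
                 (sub_target V pr r) (Z, \<sigma>) s';
       t \<in> extract_tangles (sub_V V r) V0 (sub_E V E r) (sub_top V pr r mod 2) Z \<sigma>;
       tangle_escapes V V0 E pr (fst t) = {} \<rbrakk> \<Longrightarrow>
     search_step V V0 E pr (Attr T r Y Z \<sigma>) (Return (T \<union> Y) t)"
| attr_next:
    "\<lbrakk> \<forall>s'. \<not> attr_step (sub_V V r) V0 (sub_E V E r) pr (sub_T V T r) (sub_top V pr r mod 2)
                 (sub_target V pr r) (Z, \<sigma>) s';
       \<forall>t \<in> extract_tangles (sub_V V r) V0 (sub_E V E r) (sub_top V pr r mod 2) Z \<sigma>.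
          tangle_escapes V V0 E pr (fst t) \<noteq> {} \<rbrakk> \<Longrightarrow>
     search_step V V0 E pr (Attr T r Y Z \<sigma>)
       (Loop T (\<lambda>v. if v \<in> Z then Some (sub_top V pr r) else r v)
             (Y \<union> extract_tangles (sub_V V r) V0 (sub_E V E r) (sub_top V pr r mod 2) Z \<sigma>))"

end

theory Submission
  imports Defs
begin

text \<open>
  Correctness rests on the invariant of the tangle attractor. Every vertex added to the
  attractor Z of the top priority p receives a rank above all earlier ones, and a strategy
  move either lowers the rank or stays inside the tangle whose attraction added that rank.
  Hence every cycle of the attractor strategy inside Z either passes through a vertex of
  priority p or lies in one attracted tangle, and is won by the player of p. A bottom
  strongly connected component of the graph of this strategy is thus a tangle of that player,
  and if it has no escapes in the whole game, the tangle strategy keeps every play inside it;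
  such a play is won since its recurring vertices form cycles of the tangle graph.

  Termination: a round of the outer loop removes the top attractor region by region, so it
  ends. The last region of a round covers the remaining subgame and yields a tangle; since
  known tangles cannot be extracted again while they still escape, that tangle is new, and
  there are only finitely many tangles with witness strategies.
\<close>

lemma player_vs_subset: "player_vs W V0 \<alpha> \<subseteq> W"
  by (auto simp: player_vs_def)

lemma player_vs_restrict: "W \<subseteq> V \<Longrightarrow> player_vs W V0 \<alpha> = W \<inter> player_vs V V0 \<alpha>"
  by (auto simp: player_vs_def)

lemma player_vs_opponent: "\<alpha> < 2 \<Longrightarrow> player_vs W V0 (1 - \<alpha>) = W - player_vs W V0 \<alpha>"
  by (auto simp: player_vs_def)

section \<open>Cycles and strongly connected components\<close>

definition cycle_in :: "('v \<times> 'v) set \<Rightarrow> 'v list \<Rightarrow> bool" where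
  "cycle_in H c \<longleftrightarrow> c \<noteq> [] \<and> (\<forall>i<length c. (c ! i, c ! (Suc i mod length c)) \<in> H)"

lemma cycles_won_iff: "cycles_won pr \<alpha> H \<longleftrightarrow> (\<forall>c. cycle_in H c \<longrightarrow> Max (pr ` set c) mod 2 = \<alpha>)"
  by (simp add: cycles_won_def cycle_in_def)

lemma cycles_won_mono: "cycles_won pr \<alpha> H \<Longrightarrow> G \<subseteq> H \<Longrightarrow> cycles_won pr \<alpha> G"
  unfolding cycles_won_def by blast

lemma cycle_in_set_Domain: "cycle_in H c \<Longrightarrow> set c \<subseteq> Domain H"
  by (force simp: cycle_in_def in_set_conv_nth)

lemma cycle_in_path_segment:
  assumes "i < j" "f j = f i" "\<forall>k. i \<le> k \<and> k < j \<longrightarrow> (f k, f (Suc k)) \<in> H"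
  shows "cycle_in H (map f [i..<j])"
  unfolding cycle_in_def
proof (intro conjI allI impI)
  fix k assume "k < length (map f [i..<j])"
  then have k: "i + k < j" by simp
  moreover have "map f [i..<j] ! (Suc k mod (j - i)) = f (Suc (i + k))"
    using assms(1,2) k by (cases "Suc (i + k) = j") (auto simp: nth_append)
  ultimately show "(map f [i..<j] ! k, map f [i..<j] ! (Suc k mod length (map f [i..<j]))) \<in> H"
    using assms(3) by simp
qed (use assms(1) in simp)

lemma trancl_cycle_in:
  assumes "(x, x) \<in> H\<^sup>+"
  obtains c where "cycle_in H c" "x \<in> set c" "set c \<subseteq> H\<^sup>* `` {x}"
proof -
  obtain n f where n: "n > 0" and f: "f 0 = x" "f n = x" "\<forall>i<n. (f i, f (Suc i)) \<in> H"
    using assms unfolding trancl_power relpow_fun_conv by blast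
  have "cycle_in H (map f [0..<n])"
    using n f by (intro cycle_in_path_segment) auto
  moreover have "x \<in> set (map f [0..<n])"
    using n f(1) by force
  moreover have "(x, f k) \<in> H\<^sup>*" if "k \<le> n" for k
    using that f by (intro relpow_imp_rtrancl) (auto simp: relpow_fun_conv)
  ultimately show thesis
    by (intro that) auto
qed

definition scc :: "('v \<times> 'v) set \<Rightarrow> 'v \<Rightarrow> 'v set" where
  "scc H u = {w. (u, w) \<in> H\<^sup>* \<and> (w, u) \<in> H\<^sup>*}"

lemma bottom_scc_exists:
  assumes "finite Y" "Y \<noteq> {}" "Y \<subseteq> Domain H" "H `` Y \<subseteq> Y"
  obtains u where "u \<in> Y" "H `` scc H u \<subseteq> scc H u" "Restr H (scc H u) \<noteq> {}"
proof -
  have reach_Y: "H\<^sup>* `` {u} \<subseteq> Y" if "u \<in> Y" for u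
    using Image_closed_trancl[OF assms(4)] that by blast
  obtain u where u: "u \<in> Y" and least: "\<And>x. x \<in> Y \<Longrightarrow> card (H\<^sup>* `` {u}) \<le> card (H\<^sup>* `` {x})"
    using ex_has_least_nat[of "\<lambda>x. x \<in> Y" _ "\<lambda>x. card (H\<^sup>* `` {x})"] assms(2) by blast
  have reaches_back: "(w, u) \<in> H\<^sup>*" if "(u, w) \<in> H\<^sup>*" for w
  proof -
    have fin: "finite (H\<^sup>* `` {u})"
      using finite_subset[OF reach_Y[OF u] assms(1)] .
    have sub: "H\<^sup>* `` {w} \<subseteq> H\<^sup>* `` {u}"
      using that by (blast intro: rtrancl_trans)
    have "w \<in> Y"
      using reach_Y[OF u] that by blast
    then have "card (H\<^sup>* `` {u}) \<le> card (H\<^sup>* `` {w})"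
      by (rule least)
    then have "card (H\<^sup>* `` {w}) = card (H\<^sup>* `` {u})"
      using card_mono[OF fin sub] by linarith
    then have "H\<^sup>* `` {w} = H\<^sup>* `` {u}"
      by (rule card_subset_eq[OF fin sub])
    then show ?thesis by blast
  qed
  obtain w where w: "(u, w) \<in> H"
    using assms(3) u by blast
  show thesis
  proof
    show "u \<in> Y" by (fact u)
    show "H `` scc H u \<subseteq> scc H u"
      unfolding scc_def by (blast intro: reaches_back rtrancl_into_rtrancl)
    show "Restr H (scc H u) \<noteq> {}"
      using w reaches_back unfolding scc_def by blast
  qed
qed

section \<open>Ranked graphs\<close>

text \<open>The rank of a vertex will be the stage at which the tangle attractor added it; moves
  that keep the rank are moves inside the tangle attracted at that stage.\<close>

definition ranked_by ::
    "('v \<Rightarrow> nat) \<Rightarrow> nat \<Rightarrow> 'v set \<Rightarrow> ('v \<times> 'v) set \<Rightarrow> ('v \<Rightarrow> nat) \<Rightarrow> (nat \<Rightarrow> ('v \<times> 'v) set) \<Rightarrow> bool"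
  where
  "ranked_by pr \<alpha> A G rk TG \<longleftrightarrow> (\<forall>k. cycles_won pr \<alpha> (TG k)) \<and>
     (\<forall>v w. (v, w) \<in> G \<longrightarrow> v \<notin> A \<longrightarrow> rk w < rk v \<or> rk w = rk v \<and> (v, w) \<in> TG (rk v))"

lemma ranked_byD:
  assumes "ranked_by pr \<alpha> A G rk TG" "(v, w) \<in> G" "v \<notin> A"
  shows "rk w < rk v \<or> rk w = rk v \<and> (v, w) \<in> TG (rk v)"
  using assms unfolding ranked_by_def by blast

lemma cycle_avoiding_in_level:
  assumes "ranked_by pr \<alpha> A G rk TG" "cycle_in G c" "set c \<inter> A = {}"
  shows "cycle_in (TG (rk (c ! 0))) c"
proof -
  define n where "n = length c"
  have n: "n > 0" and edge: "\<And>i. i < n \<Longrightarrow> (c ! i, c ! (Suc i mod n)) \<in> G"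
    using assms(2) by (auto simp: cycle_in_def n_def)
  have outside: "c ! i \<notin> A" if "i < n" for i
    using assms(3) that nth_mem[of i c] unfolding n_def by blast
  have descends: "rk (c ! (Suc i mod n)) \<le> rk (c ! i)" if "i < n" for i
    using ranked_byD[OF assms(1) edge[OF that] outside[OF that]] by linarith
  have reach: "rk (c ! ((i + k) mod n)) \<le> rk (c ! i)" if "i < n" for i k
  proof (induction k)
    case (Suc k)
    have "(i + Suc k) mod n = Suc ((i + k) mod n) mod n"
      by (simp add: mod_Suc_eq)
    then have "rk (c ! ((i + Suc k) mod n)) \<le> rk (c ! ((i + k) mod n))"
      using descends[of "(i + k) mod n"] n by simp
    then show ?case
      using Suc by linarith
  qed (use that in simp)
  have around: "(i + (j + n - i)) mod n = j" if "i < n" "j < n" for i j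
    using that by simp
  have below: "rk (c ! j) \<le> rk (c ! i)" if "i < n" "j < n" for i j
    using reach[OF that(1), of "j + n - i"] unfolding around[OF that] .
  have level: "rk (c ! j) = rk (c ! i)" if "i < n" "j < n" for i j
    using below[OF that] below[OF that(2,1)] by (rule antisym)
  show ?thesis
    unfolding cycle_in_def
  proof (intro conjI allI impI)
    fix i assume "i < length c"
    then have i: "i < n" by (simp add: n_def)
    moreover have "Suc i mod n < n"
      using n by simp
    ultimately have "rk (c ! (Suc i mod n)) = rk (c ! i)" "rk (c ! i) = rk (c ! 0)"
      using level n by blast+
    then show "(c ! i, c ! (Suc i mod length c)) \<in> TG (rk (c ! 0))"
      using ranked_byD[OF assms(1) edge[OF i] outside[OF i]] by (simp add: n_def)
  qed (use n in \<open>simp add: n_def\<close>)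
qed

lemma ranked_by_cycles_won:
  assumes "ranked_by pr \<alpha> A G rk TG"
    and "\<forall>a\<in>A. pr a mod 2 = \<alpha> \<and> (\<forall>v\<in>Domain G. pr v \<le> pr a)"
  shows "cycles_won pr \<alpha> G"
  unfolding cycles_won_iff
proof (intro allI impI)
  fix c assume c: "cycle_in G c"
  show "Max (pr ` set c) mod 2 = \<alpha>"
  proof (cases "set c \<inter> A = {}")
    case True
    then show ?thesis
      using cycle_avoiding_in_level[OF assms(1) c] assms(1)
      unfolding ranked_by_def cycles_won_iff by blast
  next
    case False
    then obtain a where a: "a \<in> set c" "a \<in> A" by blast
    have "Max (pr ` set c) = pr a"
      using a assms(2) cycle_in_set_Domain[OF c]
      by (intro antisym Max.boundedI Max_ge) (auto simp: subset_iff)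
    then show ?thesis using a assms(2) by simp
  qed
qed

section \<open>Tangles without escapes are dominions\<close>

lemma eventually_recurring:
  fixes f :: "nat \<Rightarrow> 'a"
  assumes "finite (range f)"
  obtains N where "\<forall>i\<ge>N. \<exists>\<^sub>\<infinity>j. f j = f i"
proof -
  have "\<forall>\<^sub>\<infinity>i. \<forall>x \<in> range f - {x. \<exists>\<^sub>\<infinity>j. f j = x}. f i \<noteq> x"
    using assms by (subst MOST_finite_Ball_distrib) auto
  then have "\<forall>\<^sub>\<infinity>i. \<exists>\<^sub>\<infinity>j. f j = f i"
    by (rule MOST_mono) auto
  then show thesis
    using that unfolding MOST_nat_le by blast
qed

text \<open>The recurring vertex of highest priority lies on a cycle through recurring vertices.\<close>

lemma wins_play_if_cycles_won:
  assumes "finite C" "\<forall>i. \<pi> i \<in> C" "\<forall>i. (\<pi> i, \<pi> (Suc i)) \<in> G" "cycles_won pr \<alpha> G"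
  shows "wins_play pr \<alpha> \<pi>"
proof -
  define R where "R = {v. \<exists>\<^sub>\<infinity>j. \<pi> j = v}"
  have "finite (range \<pi>)"
    by (rule finite_subset[OF _ assms(1)]) (use assms(2) in auto)
  then obtain N where "\<forall>i\<ge>N. \<exists>\<^sub>\<infinity>j. \<pi> j = \<pi> i"
    by (rule eventually_recurring)
  then have N: "\<forall>i\<ge>N. \<pi> i \<in> R"
    unfolding R_def by simp
  have "R \<subseteq> C"
    using assms(2) unfolding R_def by (blast dest: INFM_EX)
  then have "finite R"
    using assms(1) by (rule finite_subset)
  moreover have "R \<noteq> {}"
    using N by blast
  ultimately have "Max (pr ` R) \<in> pr ` R"
    by simp
  then obtain v where v: "Max (pr ` R) = pr v" "v \<in> R"
    by (rule imageE)
  have v_max: "pr u \<le> pr v" if "u \<in> R" for u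
    using \<open>finite R\<close> that unfolding v(1)[symmetric] by simp
  have max_recurring: "Max {p. \<exists>\<^sub>\<infinity>i. pr (\<pi> i) = p} = pr v"
  proof (rule Max_eqI)
    show "finite {p. \<exists>\<^sub>\<infinity>i. pr (\<pi> i) = p}"
      by (rule finite_subset[OF _ finite_imageI[OF assms(1)]])
        (use assms(2) in \<open>blast dest: INFM_EX\<close>)
    show "pr v \<in> {p. \<exists>\<^sub>\<infinity>i. pr (\<pi> i) = p}"
      using v(2) unfolding R_def by (auto elim: INFM_mono)
    fix p assume "p \<in> {p. \<exists>\<^sub>\<infinity>i. pr (\<pi> i) = p}"
    then obtain i where "i \<ge> N" "pr (\<pi> i) = p"
      unfolding INFM_nat_le by blast
    then show "p \<le> pr v"
      using N v_max by blast
  qed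
  obtain i where i: "N \<le> i" "\<pi> i = v"
    using v(2) unfolding R_def INFM_nat_le by blast
  obtain j where j: "Suc i \<le> j" "\<pi> j = v"
    using v(2) unfolding R_def INFM_nat_le by blast
  have cycle: "cycle_in G (map \<pi> [i..<j])"
    using i j assms(3) by (intro cycle_in_path_segment) auto
  have "Max (pr ` set (map \<pi> [i..<j])) = pr v"
  proof (rule Max_eqI)
    show "pr v \<in> pr ` set (map \<pi> [i..<j])"
      using i j by force
    fix p assume "p \<in> pr ` set (map \<pi> [i..<j])"
    then obtain k where "i \<le> k" "p = pr (\<pi> k)"
      by auto
    then show "p \<le> pr v"
      using N v_max i(1) by simp
  qed simp
  moreover have "Max (pr ` set (map \<pi> [i..<j])) mod 2 = \<alpha>"
    using assms(4) cycle unfolding cycles_won_iff by blast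
  ultimately show ?thesis
    by (simp add: wins_play_def max_recurring)
qed

lemma tangle_dominion:
  assumes game: "parity_game V V0 E pr" and witness: "tangle_witness V V0 E pr C \<tau>"
    and closed: "tangle_escapes V V0 E pr C = {}"
  shows "dominion V V0 E pr (Max (pr ` C) mod 2) C"
proof -
  define \<alpha> where "\<alpha> = Max (pr ` C) mod 2"
  define G where "G = tangle_graph V V0 E \<alpha> C \<tau>"
  have C: "C \<subseteq> V" "finite C"
    using witness game finite_subset[of C V] by (simp_all add: tangle_witness_def parity_game_def)
  have \<tau>: "strategy V V0 E \<alpha> \<tau>" "dom \<tau> = C \<inter> player_vs V V0 \<alpha>" "ran \<tau> \<subseteq> C"
    and won: "cycles_won pr \<alpha> G"
    using witness unfolding tangle_witness_def Let_def \<alpha>_def[symmetric] G_def by auto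
  show ?thesis
    unfolding dominion_def \<alpha>_def[symmetric]
  proof (intro exI[of _ \<tau>] conjI allI impI \<tau>(1))
    fix \<pi> assume \<pi>: "play V E \<pi> \<and> \<pi> 0 \<in> C \<and> consistent \<tau> \<pi>"
    have move: "\<pi> (Suc i) \<in> C \<and> (\<pi> i, \<pi> (Suc i)) \<in> G" if "\<pi> i \<in> C" for i
    proof -
      have edge: "(\<pi> i, \<pi> (Suc i)) \<in> E"
        using \<pi> unfolding play_def by blast
      show ?thesis
      proof (cases "\<pi> i \<in> player_vs V V0 \<alpha>")
        case True
        then have "\<tau> (\<pi> i) = Some (\<pi> (Suc i))"
          using \<pi> \<tau>(2) that unfolding consistent_def by blast
        moreover from this have "\<pi> (Suc i) \<in> C"
          using \<tau>(3) by (auto simp: ran_def)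
        ultimately show ?thesis
          using edge that unfolding G_def tangle_graph_def by blast
      next
        case False
        then have opponent: "\<pi> i \<in> player_vs V V0 (1 - \<alpha>)"
          using that C(1) player_vs_opponent[of \<alpha> V V0] unfolding \<alpha>_def by auto
        then have "\<pi> (Suc i) \<in> C"
          using closed edge that unfolding tangle_escapes_def \<alpha>_def by blast
        then show ?thesis
          using opponent edge that unfolding G_def tangle_graph_def by blast
      qed
    qed
    have stays: "\<pi> i \<in> C" for i
      by (induction i) (use \<pi> move in auto)
    then show "\<pi> i \<in> C" for i .
    show "wins_play pr \<alpha> \<pi>"
      using wins_play_if_cycles_won[OF C(2) _ _ won] stays move by blast
  qed
qed

section \<open>The tangle attractor\<close>

definition strategy_moves ::
    "'v set \<Rightarrow> 'v set \<Rightarrow> ('v \<times> 'v) set \<Rightarrow> nat \<Rightarrow> ('v \<rightharpoonup> 'v) \<Rightarrow> 'v set \<Rightarrow> ('v \<times> 'v) set" where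
  "strategy_moves W V0 F \<alpha> \<sigma> X =
     {(v, w). v \<in> X \<inter> player_vs W V0 \<alpha> \<and> \<sigma> v = Some w} \<union>
     {(v, w). (v, w) \<in> F \<and> v \<in> X \<inter> player_vs W V0 (1 - \<alpha>)}"

lemma ranked_by_subset:
  assumes "ranked_by pr \<alpha> A G rk TG" "\<And>v w. (v, w) \<in> G' \<Longrightarrow> v \<notin> A \<Longrightarrow> (v, w) \<in> G"
  shows "ranked_by pr \<alpha> A G' rk TG"
  using assms unfolding ranked_by_def by blast

text \<open>The new vertices N get a rank above all ranks in Z, with H as its level graph.\<close>

lemma ranked_by_extend:
  assumes ranked: "ranked_by pr \<alpha> A G rk TG" and "finite Z"
    and old: "\<And>v w. (v, w) \<in> G \<Longrightarrow> v \<notin> A \<Longrightarrow> v \<in> Z \<and> w \<in> Z"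
    and new: "\<And>v w. (v, w) \<in> G' \<Longrightarrow> v \<notin> A \<Longrightarrow>
                (v, w) \<in> G \<or> v \<in> N \<and> (w \<in> Z \<or> w \<in> N \<and> (v, w) \<in> H)"
    and "N \<inter> Z = {}" and "cycles_won pr \<alpha> H"
  shows "\<exists>rk' TG'. ranked_by pr \<alpha> A G' rk' TG'"
proof -
  define n where "n = Suc (Max (rk ` Z))"
  have below_n: "rk x < n" if "x \<in> Z" for x
    using \<open>finite Z\<close> that by (simp add: n_def le_imp_less_Suc)
  define rk' where "rk' x = (if x \<in> N then n else rk x)" for x
  have "ranked_by pr \<alpha> A G' rk' (TG(n := H))"
    unfolding ranked_by_def
  proof (intro conjI allI impI)
    show "cycles_won pr \<alpha> ((TG(n := H)) k)" for k
      using ranked \<open>cycles_won pr \<alpha> H\<close> by (simp add: ranked_by_def)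
  next
    fix v w assume "(v, w) \<in> G'" "v \<notin> A"
    then consider "(v, w) \<in> G" | "v \<in> N" "w \<in> Z" | "v \<in> N" "w \<in> N" "(v, w) \<in> H"
      using new by blast
    then show "rk' w < rk' v \<or> rk' w = rk' v \<and> (v, w) \<in> (TG(n := H)) (rk' v)"
    proof cases
      case 1
      then have "v \<in> Z" "w \<in> Z"
        using old \<open>v \<notin> A\<close> by auto
      then show ?thesis
        using ranked_byD[OF ranked 1 \<open>v \<notin> A\<close>] below_n \<open>N \<inter> Z = {}\<close> by (auto simp: rk'_def)
    next
      case 2
      then show ?thesis
        using below_n \<open>N \<inter> Z = {}\<close> by (auto simp: rk'_def)
    qed (simp add: rk'_def)
  qed
  then show ?thesis by blast
qed

locale subgame_attractor =
  fixes V V0 :: "'v set" and E :: "('v \<times> 'v) set" and pr :: "'v \<Rightarrow> nat"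
    and W :: "'v set" and F :: "('v \<times> 'v) set" and \<alpha> :: nat and A :: "'v set"
    and TT :: "('v set \<times> ('v \<rightharpoonup> 'v)) set"
  assumes game: "parity_game V V0 E pr"
    and W_sub: "W \<subseteq> V" and F_eq: "F = E \<inter> W \<times> W" and two_players: "\<alpha> < 2"
    and A_sub: "A \<subseteq> W" and A_top: "\<forall>a\<in>A. pr a mod 2 = \<alpha> \<and> (\<forall>v\<in>W. pr v \<le> pr a)"
    and tangles: "\<forall>(t, \<tau>) \<in> TT. t \<subseteq> W \<and> tangle_witness V V0 E pr t \<tau>"
begin

abbreviation own :: "'v set" where "own \<equiv> player_vs W V0 \<alpha>"
abbreviation opp :: "'v set" where "opp \<equiv> player_vs W V0 (1 - \<alpha>)"

lemma opp_eq: "opp = W - own"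
  using two_players by (rule player_vs_opponent)

lemma finite_W: "finite W"
  using game W_sub finite_subset[of W V] by (simp add: parity_game_def)

text \<open>The targets A are exempt: their strategy may still be missing, and opponent moves from
  them may leave Z.\<close>

definition attr_inv :: "'v set \<Rightarrow> ('v \<rightharpoonup> 'v) \<Rightarrow> bool" where
  "attr_inv Z \<sigma> \<longleftrightarrow> A \<subseteq> Z \<and> Z \<subseteq> W \<and> dom \<sigma> \<subseteq> Z \<inter> own \<and>
     (\<forall>v w. \<sigma> v = Some w \<longrightarrow> (v, w) \<in> F \<and> w \<in> Z) \<and>
     Z \<inter> own - A \<subseteq> dom \<sigma> \<and>
     (\<forall>v \<in> Z \<inter> opp - A. \<forall>w. (v, w) \<in> F \<longrightarrow> w \<in> Z) \<and>
     (\<exists>rk TG. ranked_by pr \<alpha> A (strategy_moves W V0 F \<alpha> \<sigma> Z) rk TG)"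

lemma attr_invD:
  assumes "attr_inv Z \<sigma>"
  shows "A \<subseteq> Z" "Z \<subseteq> W" "dom \<sigma> \<subseteq> Z \<inter> own"
    and "\<sigma> v = Some w \<Longrightarrow> (v, w) \<in> F \<and> w \<in> Z"
    and "Z \<inter> own - A \<subseteq> dom \<sigma>"
    and "v \<in> Z \<inter> opp - A \<Longrightarrow> (v, w) \<in> F \<Longrightarrow> w \<in> Z"
    and "\<exists>rk TG. ranked_by pr \<alpha> A (strategy_moves W V0 F \<alpha> \<sigma> Z) rk TG"
  using assms unfolding attr_inv_def by blast+

lemma attr_inv_finite: "attr_inv Z \<sigma> \<Longrightarrow> finite Z"
  using finite_W attr_invD(2) by (rule finite_subset[rotated])

lemma attr_inv_moves_closed:
  assumes "attr_inv Z \<sigma>" "(v, w) \<in> strategy_moves W V0 F \<alpha> \<sigma> Z" "v \<notin> A"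
  shows "v \<in> Z \<and> w \<in> Z"
  using assms(2,3) attr_invD(4,6)[OF assms(1)] unfolding strategy_moves_def by blast

lemma attr_inv_init: "attr_inv A Map.empty"
proof -
  have "ranked_by pr \<alpha> A (strategy_moves W V0 F \<alpha> Map.empty A) rk (\<lambda>_. {})" for rk
    by (auto simp: ranked_by_def strategy_moves_def cycles_won_def)
  then show ?thesis
    using A_sub unfolding attr_inv_def by blast
qed

lemma attr_inv_target_strat:
  assumes inv: "attr_inv Z \<sigma>" and a: "a \<in> A" "a \<in> own" "(a, w) \<in> F" "w \<in> Z"
  shows "attr_inv Z (\<sigma>(a \<mapsto> w))"
  unfolding attr_inv_def
proof (intro conjI)
  obtain rk TG where "ranked_by pr \<alpha> A (strategy_moves W V0 F \<alpha> \<sigma> Z) rk TG"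
    using attr_invD(7)[OF inv] by blast
  then have "ranked_by pr \<alpha> A (strategy_moves W V0 F \<alpha> (\<sigma>(a \<mapsto> w)) Z) rk TG"
    by (rule ranked_by_subset) (use a in \<open>auto simp: strategy_moves_def split: if_splits\<close>)
  then show "\<exists>rk TG. ranked_by pr \<alpha> A (strategy_moves W V0 F \<alpha> (\<sigma>(a \<mapsto> w)) Z) rk TG"
    by blast
qed (use attr_invD(1-6)[OF inv] a in auto)

lemma attr_inv_add_own:
  assumes inv: "attr_inv Z \<sigma>" and v: "v \<in> own" "v \<notin> Z" "(v, w) \<in> F" "w \<in> Z"
  shows "attr_inv (insert v Z) (\<sigma>(v \<mapsto> w))"
  unfolding attr_inv_def
proof (intro conjI)
  have "v \<notin> dom \<sigma>"
    using attr_invD(3)[OF inv] v(2) by blast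
  then have "(x, y) \<in> strategy_moves W V0 F \<alpha> \<sigma> Z \<or> x \<in> {v} \<and> y \<in> Z"
    if "(x, y) \<in> strategy_moves W V0 F \<alpha> (\<sigma>(v \<mapsto> w)) (insert v Z)" for x y
    using that v(1,2,4) opp_eq by (auto simp: strategy_moves_def split: if_splits)
  then show "\<exists>rk TG. ranked_by pr \<alpha> A (strategy_moves W V0 F \<alpha> (\<sigma>(v \<mapsto> w)) (insert v Z)) rk TG"
    using attr_invD(7)[OF inv] attr_inv_finite[OF inv] attr_inv_moves_closed[OF inv] v(2)
    by (elim exE, intro ranked_by_extend[where N = "{v}" and H = "{}"]) (auto simp: cycles_won_def)
qed (use attr_invD(1-6)[OF inv] v player_vs_subset[of W V0 \<alpha>] opp_eq in \<open>auto split: if_splits\<close>)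

lemma attr_inv_add_opp:
  assumes inv: "attr_inv Z \<sigma>" and v: "v \<in> opp" "v \<notin> Z" "\<forall>w. (v, w) \<in> F \<longrightarrow> w \<in> Z"
  shows "attr_inv (insert v Z) \<sigma>"
  unfolding attr_inv_def
proof (intro conjI)
  have "(x, y) \<in> strategy_moves W V0 F \<alpha> \<sigma> Z \<or> x \<in> {v} \<and> y \<in> Z"
    if "(x, y) \<in> strategy_moves W V0 F \<alpha> \<sigma> (insert v Z)" for x y
    using that v opp_eq by (auto simp: strategy_moves_def)
  then show "\<exists>rk TG. ranked_by pr \<alpha> A (strategy_moves W V0 F \<alpha> \<sigma> (insert v Z)) rk TG"
    using attr_invD(7)[OF inv] attr_inv_finite[OF inv] attr_inv_moves_closed[OF inv] v(2)
    by (elim exE, intro ranked_by_extend[where N = "{v}" and H = "{}"]) (auto simp: cycles_won_def)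
qed (use attr_invD(1-6)[OF inv] v player_vs_subset[of W V0 "1 - \<alpha>"] opp_eq in auto)

lemma attracted_tangle:
  assumes "(t, \<tau>) \<in> TT" "Max (pr ` t) mod 2 = \<alpha>"
  shows "t \<subseteq> W" "dom \<tau> = t \<inter> own"
    and "\<tau> u = Some w \<Longrightarrow> (u, w) \<in> F \<and> w \<in> t"
    and "cycles_won pr \<alpha> (tangle_graph V V0 E \<alpha> t \<tau>)"
proof -
  have t: "t \<subseteq> W" and witness: "tangle_witness V V0 E pr t \<tau>"
    using tangles assms(1) by auto
  show "t \<subseteq> W" by (fact t)
  have \<tau>: "strategy V V0 E \<alpha> \<tau>" "dom \<tau> = t \<inter> player_vs V V0 \<alpha>" "ran \<tau> \<subseteq> t"
    and "cycles_won pr \<alpha> (tangle_graph V V0 E \<alpha> t \<tau>)"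
    using witness assms(2) unfolding tangle_witness_def Let_def by auto
  then show "cycles_won pr \<alpha> (tangle_graph V V0 E \<alpha> t \<tau>)" by simp
  show "dom \<tau> = t \<inter> own"
    using \<tau>(2) t W_sub player_vs_restrict[OF W_sub] by auto
  assume "\<tau> u = Some w"
  moreover from this have "w \<in> t" "u \<in> t"
    using \<tau>(2,3) by (auto simp: ran_def)
  ultimately show "(u, w) \<in> F \<and> w \<in> t"
    using \<tau>(1) t F_eq unfolding strategy_def by blast
qed

lemma attr_inv_add_tangle:
  assumes inv: "attr_inv Z \<sigma>" and t: "(t, \<tau>) \<in> TT" "Max (pr ` t) mod 2 = \<alpha>"
    and escapes: "tangle_escapes W V0 F pr t \<subseteq> Z"
  defines "\<sigma>' \<equiv> \<lambda>u. if u \<in> t \<inter> own \<and> u \<notin> dom \<sigma> then \<tau> u else \<sigma> u"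
  shows "attr_inv (Z \<union> t) \<sigma>'"
proof -
  note \<tau> = attracted_tangle[OF t]
  have leave: "w \<in> Z" if "u \<in> t" "u \<in> opp" "(u, w) \<in> F" "w \<notin> t" for u w
    using escapes that t(2) unfolding tangle_escapes_def by blast
  have \<sigma>'_old: "\<sigma>' u = \<sigma> u" if "u \<in> Z - A" for u
    using that attr_invD(3,5)[OF inv] unfolding \<sigma>'_def by auto
  have \<sigma>'_new: "\<sigma>' u = \<tau> u" if "u \<in> t - Z" "u \<in> own" for u
    using that attr_invD(3)[OF inv] unfolding \<sigma>'_def by auto
  have \<sigma>'_moves: "(u, w) \<in> F \<and> w \<in> Z \<union> t" if "\<sigma>' u = Some w" for u w
    using that attr_invD(4)[OF inv] \<tau>(3) unfolding \<sigma>'_def by (auto split: if_splits)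
  have dom_\<sigma>': "dom \<sigma>' \<subseteq> (Z \<union> t) \<inter> own"
    using attr_invD(3)[OF inv] \<tau>(2) unfolding \<sigma>'_def by (auto simp: dom_def split: if_splits)
  have "(x, y) \<in> strategy_moves W V0 F \<alpha> \<sigma> Z \<or>
      x \<in> t - Z \<and> (y \<in> Z \<or> y \<in> t - Z \<and> (x, y) \<in> tangle_graph V V0 E \<alpha> t \<tau>)"
    if "(x, y) \<in> strategy_moves W V0 F \<alpha> \<sigma>' (Z \<union> t)" "x \<notin> A" for x y
  proof (cases "x \<in> Z")
    case True
    then show ?thesis
      using that \<sigma>'_old[of x] by (auto simp: strategy_moves_def)
  next
    case False
    then have x: "x \<in> t - Z"
      using that by (auto simp: strategy_moves_def)
    have "(x, y) \<in> F" "y \<in> Z \<union> t"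
      using that \<sigma>'_moves leave[of x y] x by (auto simp: strategy_moves_def)
    moreover have "x \<in> player_vs V V0 \<alpha> \<and> \<tau> x = Some y \<or> x \<in> player_vs V V0 (1 - \<alpha>)"
      using that \<sigma>'_new[OF x] player_vs_restrict[OF W_sub] by (auto simp: strategy_moves_def)
    ultimately show ?thesis
      using x F_eq unfolding tangle_graph_def by blast
  qed
  then have ranked: "\<exists>rk TG. ranked_by pr \<alpha> A (strategy_moves W V0 F \<alpha> \<sigma>' (Z \<union> t)) rk TG"
    using attr_invD(7)[OF inv] attr_inv_finite[OF inv] attr_inv_moves_closed[OF inv] \<tau>(4)
    by (elim exE, intro ranked_by_extend[where N = "t - Z"]) auto
  have "Z \<union> t \<subseteq> W"
    using attr_invD(2)[OF inv] \<tau>(1) by blast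
  moreover have "(Z \<union> t) \<inter> own - A \<subseteq> dom \<sigma>'"
  proof
    fix x assume x: "x \<in> (Z \<union> t) \<inter> own - A"
    show "x \<in> dom \<sigma>'"
    proof (cases "x \<in> Z")
      case True
      then show ?thesis
        using x attr_invD(5)[OF inv] \<sigma>'_old[of x] by (auto simp: dom_def)
    next
      case False
      then show ?thesis
        using x \<sigma>'_new[of x] \<tau>(2) by (auto simp: dom_def)
    qed
  qed
  moreover have "\<forall>v \<in> (Z \<union> t) \<inter> opp - A. \<forall>w. (v, w) \<in> F \<longrightarrow> w \<in> Z \<union> t"
    using attr_invD(6)[OF inv] leave by blast
  ultimately show ?thesis
    unfolding attr_inv_def using attr_invD(1)[OF inv] dom_\<sigma>' \<sigma>'_moves ranked by blast
qed

lemma attr_inv_step: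
  assumes "attr_inv Z \<sigma>" "attr_step W V0 F pr TT \<alpha> A (Z, \<sigma>) (Z', \<sigma>')"
  shows "attr_inv Z' \<sigma>'"
  using assms(2)
proof cases
  case (target_strat a w)
  then show ?thesis
    using attr_inv_target_strat[OF assms(1)] by simp
next
  case (add_own v w)
  then show ?thesis
    using attr_inv_add_own[OF assms(1)] by simp
next
  case (add_opp v)
  then show ?thesis
    using attr_inv_add_opp[OF assms(1)] by simp
next
  case (add_tangle t \<tau>)
  then show ?thesis
    using attr_inv_add_tangle[OF assms(1), of t \<tau>] by simp
qed

end

section \<open>Extracting tangles\<close>

lemma extract_Y_unfold:
  "extract_Y W V0 F \<alpha> Z \<sigma> =
     {v \<in> Z. (v \<in> player_vs W V0 (1 - \<alpha>) \<longrightarrow> (\<forall>w. (v, w) \<in> F \<longrightarrow> w \<in> extract_Y W V0 F \<alpha> Z \<sigma>)) \<and>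
            (v \<in> player_vs W V0 \<alpha> \<longrightarrow> (\<exists>w \<in> extract_Y W V0 F \<alpha> Z \<sigma>. \<sigma> v = Some w))}"
  unfolding extract_Y_def by (rule gfp_unfold) (auto intro!: monoI)

lemma extract_Y_subset: "extract_Y W V0 F \<alpha> Z \<sigma> \<subseteq> Z"
  by (subst extract_Y_unfold) blast

lemma extract_Y_own:
  "v \<in> extract_Y W V0 F \<alpha> Z \<sigma> \<Longrightarrow> v \<in> player_vs W V0 \<alpha> \<Longrightarrow> \<exists>w \<in> extract_Y W V0 F \<alpha> Z \<sigma>. \<sigma> v = Some w"
  by (subst (asm) extract_Y_unfold) blast

lemma extract_graph_eq:
  "extract_graph W V0 F \<alpha> Z \<sigma> = strategy_moves W V0 F \<alpha> \<sigma> (extract_Y W V0 F \<alpha> Z \<sigma>)"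
  by (simp add: extract_graph_def strategy_moves_def)

lemma extract_graph_closed:
  "extract_graph W V0 F \<alpha> Z \<sigma> `` extract_Y W V0 F \<alpha> Z \<sigma> \<subseteq> extract_Y W V0 F \<alpha> Z \<sigma>"
proof -
  have "w \<in> extract_Y W V0 F \<alpha> Z \<sigma>"
    if "v \<in> extract_Y W V0 F \<alpha> Z \<sigma>" "(v, w) \<in> extract_graph W V0 F \<alpha> Z \<sigma>" for v w
    using that(2) extract_Y_own[OF that(1)] that(1)
    by (subst (asm) (2) extract_Y_unfold) (auto simp: extract_graph_def)
  then show ?thesis by blast
qed

lemma extract_Y_greatest:
  assumes "X \<subseteq> Z" "\<And>v w. v \<in> X \<Longrightarrow> v \<in> player_vs W V0 (1 - \<alpha>) \<Longrightarrow> (v, w) \<in> F \<Longrightarrow> w \<in> X"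
    "\<And>v. v \<in> X \<Longrightarrow> v \<in> player_vs W V0 \<alpha> \<Longrightarrow> \<exists>w \<in> X. \<sigma> v = Some w"
  shows "X \<subseteq> extract_Y W V0 F \<alpha> Z \<sigma>"
  unfolding extract_Y_def by (rule gfp_upperbound) (use assms in blast)

lemma extract_tangles_iff:
  "(C, \<tau>) \<in> extract_tangles W V0 F \<alpha> Z \<sigma> \<longleftrightarrow> \<tau> = \<sigma> |` C \<and>
     (\<exists>u \<in> extract_Y W V0 F \<alpha> Z \<sigma>. C = scc (extract_graph W V0 F \<alpha> Z \<sigma>) u \<and>
        extract_graph W V0 F \<alpha> Z \<sigma> `` C \<subseteq> C \<and> Restr (extract_graph W V0 F \<alpha> Z \<sigma>) C \<noteq> {})"
  unfolding extract_tangles_def scc_def Let_def by blast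

lemma rtrancl_Restr_closed:
  assumes "H `` C \<subseteq> C" "(x, y) \<in> H\<^sup>*" "x \<in> C"
  shows "(x, y) \<in> (Restr H C)\<^sup>*"
  using assms(2)
proof (induction rule: rtrancl_induct)
  case (step y z)
  moreover from this have "y \<in> C"
    using assms(1,3) Image_closed_trancl[OF assms(1)] by blast
  ultimately show ?case
    using assms(1) by (blast intro: rtrancl_into_rtrancl)
qed simp

text \<open>A cycle through the vertex of highest priority in the component decides its parity.\<close>

lemma closed_component_top_parity:
  assumes won: "cycles_won pr \<alpha> H" and "finite C" and closed: "H `` C \<subseteq> C"
    and "Restr H C \<noteq> {}" and connected: "\<And>x y. x \<in> C \<Longrightarrow> y \<in> C \<Longrightarrow> (x, y) \<in> H\<^sup>*"
  shows "Max (pr ` C) mod 2 = \<alpha>"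
proof -
  obtain v w where vw: "v \<in> C" "w \<in> C" "(v, w) \<in> H"
    using \<open>Restr H C \<noteq> {}\<close> by blast
  then have "pr ` C \<noteq> {}" by blast
  then obtain m where m: "m \<in> C" "Max (pr ` C) = pr m"
    using Max_in[OF finite_imageI[OF \<open>finite C\<close>]] by (metis imageE)
  have "(m, m) \<in> H\<^sup>+"
    using connected[OF m(1) vw(1)] vw(3) connected[OF vw(2) m(1)]
    by (blast intro: rtrancl_into_trancl1 trancl_rtrancl_trancl)
  then obtain c where c: "cycle_in H c" "m \<in> set c" "set c \<subseteq> H\<^sup>* `` {m}"
    by (rule trancl_cycle_in)
  have "set c \<subseteq> C"
    using c(3) Image_closed_trancl[OF closed] m(1) by blast
  have "Max (pr ` set c) = pr m"
  proof (rule Max_eqI)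
    show "pr m \<in> pr ` set c"
      using c(2) by blast
  qed (use \<open>finite C\<close> \<open>set c \<subseteq> C\<close> in \<open>auto simp flip: m(2)\<close>)
  then show ?thesis
    using won c(1) m(2) unfolding cycles_won_iff by metis
qed

lemma extract_tangles_component:
  assumes "(C, \<tau>) \<in> extract_tangles W V0 F \<alpha> Z \<sigma>"
  defines "H \<equiv> extract_graph W V0 F \<alpha> Z \<sigma>"
  shows "\<tau> = \<sigma> |` C" "C \<subseteq> extract_Y W V0 F \<alpha> Z \<sigma>" "H `` C \<subseteq> C" "Restr H C \<noteq> {}"
    and "x \<in> C \<Longrightarrow> y \<in> C \<Longrightarrow> (x, y) \<in> (Restr H C)\<^sup>*"
proof -
  obtain u where u: "u \<in> extract_Y W V0 F \<alpha> Z \<sigma>" and C: "C = scc H u" "H `` C \<subseteq> C" "Restr H C \<noteq> {}"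
    and \<tau>: "\<tau> = \<sigma> |` C"
    using assms(1) unfolding extract_tangles_iff H_def by blast
  show "\<tau> = \<sigma> |` C" "H `` C \<subseteq> C" "Restr H C \<noteq> {}"
    by (fact \<tau> C(2) C(3))+
  have "C \<subseteq> H\<^sup>* `` {u}"
    using C(1) unfolding scc_def by blast
  then show "C \<subseteq> extract_Y W V0 F \<alpha> Z \<sigma>"
    using Image_closed_trancl[OF extract_graph_closed[of W V0 F \<alpha> Z \<sigma>]] u unfolding H_def by blast
  show "(x, y) \<in> (Restr H C)\<^sup>*" if "x \<in> C" "y \<in> C"
    using that C(1,2) unfolding scc_def by (blast intro: rtrancl_Restr_closed rtrancl_trans)
qed

context subgame_attractor
begin

lemma attr_inv_cycles_won:
  assumes "attr_inv Z \<sigma>"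
  shows "cycles_won pr \<alpha> (strategy_moves W V0 F \<alpha> \<sigma> Z)"
proof -
  have "Domain (strategy_moves W V0 F \<alpha> \<sigma> Z) \<subseteq> W"
    using attr_invD(2)[OF assms] by (auto simp: strategy_moves_def)
  then show ?thesis
    using attr_invD(7)[OF assms] A_top by (blast intro: ranked_by_cycles_won)
qed

lemma tangle_graph_of_extracted:
  assumes inv: "attr_inv Z \<sigma>"
    and C: "C \<subseteq> extract_Y W V0 F \<alpha> Z \<sigma>" "extract_graph W V0 F \<alpha> Z \<sigma> `` C \<subseteq> C"
  shows "tangle_graph V V0 E \<alpha> C (\<sigma> |` C) = Restr (extract_graph W V0 F \<alpha> Z \<sigma>) C"
proof -
  have CW: "C \<subseteq> W"
    using C(1) extract_Y_subset[of W V0 F \<alpha> Z \<sigma>] attr_invD(2)[OF inv] by blast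
  have own_\<sigma>: "u \<in> own" if "\<sigma> u = Some w" for u w
    using that attr_invD(3)[OF inv] by blast
  have opp_V: "C \<inter> player_vs V V0 (1 - \<alpha>) = C \<inter> opp"
    using CW player_vs_restrict[OF W_sub] by blast
  have \<sigma>_F: "(x, y) \<in> F" if "\<sigma> x = Some y" for x y
    using attr_invD(4)[OF inv] that by blast
  show ?thesis
  proof (intro equalityI subrelI)
    fix x y assume "(x, y) \<in> tangle_graph V V0 E \<alpha> C (\<sigma> |` C)"
    then consider "x \<in> C" "\<sigma> x = Some y" | "(x, y) \<in> E" "x \<in> C \<inter> opp" "y \<in> C"
      unfolding tangle_graph_def opp_V by (auto simp: restrict_map_def split: if_splits)
    then show "(x, y) \<in> Restr (extract_graph W V0 F \<alpha> Z \<sigma>) C"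
    proof cases
      case 1
      then have "(x, y) \<in> extract_graph W V0 F \<alpha> Z \<sigma>"
        using C(1) own_\<sigma> unfolding extract_graph_def by blast
      then show ?thesis
        using 1 C(2) by blast
    next
      case 2
      then show ?thesis
        using C(1) CW F_eq unfolding extract_graph_def by blast
    qed
  next
    fix x y assume xy: "(x, y) \<in> Restr (extract_graph W V0 F \<alpha> Z \<sigma>) C"
    then have "(x, y) \<in> E" "x \<in> C" "y \<in> C"
      unfolding extract_graph_def using \<sigma>_F F_eq by blast+
    moreover have "\<sigma> x = Some y \<or> x \<in> opp"
      using xy unfolding extract_graph_def by blast
    ultimately show "(x, y) \<in> tangle_graph V V0 E \<alpha> C (\<sigma> |` C)"
      using opp_V unfolding tangle_graph_def by auto
  qed
qed

lemma extracted_tangle: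
  assumes inv: "attr_inv Z \<sigma>" and extracted: "(C, \<tau>) \<in> extract_tangles W V0 F \<alpha> Z \<sigma>"
  shows "C \<subseteq> Z" "cycles_won pr \<alpha> (extract_graph W V0 F \<alpha> Z \<sigma>)" "Max (pr ` C) mod 2 = \<alpha>"
    and "tangle_escapes W V0 F pr C = {}"
proof -
  define H where "H = extract_graph W V0 F \<alpha> Z \<sigma>"
  note C = extract_tangles_component[OF extracted, folded H_def]
  show CZ: "C \<subseteq> Z"
    using C(2) extract_Y_subset[of W V0 F \<alpha> Z \<sigma>] by blast
  have "H \<subseteq> strategy_moves W V0 F \<alpha> \<sigma> Z"
    using extract_Y_subset[of W V0 F \<alpha> Z \<sigma>]
    unfolding H_def extract_graph_eq strategy_moves_def by blast
  then show won: "cycles_won pr \<alpha> H"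
    using attr_inv_cycles_won[OF inv] by (rule cycles_won_mono[rotated])
  have "finite C"
    using CZ attr_inv_finite[OF inv] finite_subset by blast
  then show parity: "Max (pr ` C) mod 2 = \<alpha>"
    using closed_component_top_parity[OF won _ C(3,4)] C(5) rtrancl_mono[of "Restr H C" H] by blast
  have "(u, w) \<in> H" if "u \<in> C" "u \<in> opp" "(u, w) \<in> F" for u w
    using that C(2) unfolding H_def extract_graph_def by blast
  then show "tangle_escapes W V0 F pr C = {}"
    using C(3) unfolding tangle_escapes_def parity by blast
qed

lemma extracted_tangle_witness:
  assumes inv: "attr_inv Z \<sigma>" and extracted: "(C, \<tau>) \<in> extract_tangles W V0 F \<alpha> Z \<sigma>"
  shows "tangle_witness V V0 E pr C \<tau>"
proof -
  define H where "H = extract_graph W V0 F \<alpha> Z \<sigma>"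
  note C = extract_tangles_component[OF extracted, folded H_def]
  note extracted_tangle[OF inv extracted, folded H_def]
  then have CW: "C \<subseteq> W" and won: "cycles_won pr \<alpha> H" and parity: "Max (pr ` C) mod 2 = \<alpha>"
    using attr_invD(2)[OF inv] by blast+
  have graph: "tangle_graph V V0 E \<alpha> C \<tau> = Restr H C"
    using tangle_graph_of_extracted[OF inv C(2)] C(1,3) unfolding H_def by blast
  have "C \<inter> own \<subseteq> dom \<sigma>"
    using C(2) extract_Y_own[of _ W V0 F \<alpha> Z \<sigma>] by blast
  then have dom_\<tau>: "dom \<tau> = C \<inter> player_vs V V0 \<alpha>"
    using CW player_vs_restrict[OF W_sub, of V0 \<alpha>] attr_invD(3)[OF inv] unfolding C(1) by auto
  have \<tau>_edge: "x \<in> C \<and> (x, y) \<in> E" if "\<tau> x = Some y" for x y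
    using that attr_invD(4)[OF inv] F_eq unfolding C(1) restrict_map_def by (auto split: if_splits)
  then have "\<tau> x = Some y \<Longrightarrow> y \<in> C" for x y
    using graph unfolding tangle_graph_def by blast
  then have "strategy V V0 E \<alpha> \<tau>" "ran \<tau> \<subseteq> C"
    using dom_\<tau> \<tau>_edge unfolding strategy_def ran_def by auto
  moreover have "C \<noteq> {}" "C \<subseteq> V"
    using C(4) CW W_sub by auto
  ultimately show ?thesis
    unfolding tangle_witness_def Let_def parity graph
    using dom_\<tau> C(5) cycles_won_mono[OF won] by blast
qed

lemma extract_tangles_nonempty:
  assumes inv: "attr_inv W \<sigma>" and settled: "\<not> attr_pending W V0 F \<alpha> A W \<sigma>"
    and "W \<noteq> {}" and total: "\<forall>v\<in>W. \<exists>w\<in>W. (v, w) \<in> E"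
  shows "extract_tangles W V0 F \<alpha> W \<sigma> \<noteq> {}"
proof -
  have \<sigma>_total: "\<exists>w\<in>W. \<sigma> v = Some w" if v: "v \<in> own" for v
  proof -
    have "v \<in> W"
      using v player_vs_subset[of W V0 \<alpha>] by blast
    have "v \<in> dom \<sigma>"
    proof (cases "v \<in> A")
      case True
      obtain w where "w \<in> W" "(v, w) \<in> E"
        using total \<open>v \<in> W\<close> by blast
      then show ?thesis
        using settled True v \<open>v \<in> W\<close> F_eq unfolding attr_pending_def by blast
    next
      case False
      then show ?thesis
        using attr_invD(5)[OF inv] v \<open>v \<in> W\<close> by blast
    qed
    then obtain w where "\<sigma> v = Some w"
      by blast
    then show ?thesis
      using attr_invD(4)[OF inv] by blast
  qed
  have "W \<subseteq> extract_Y W V0 F \<alpha> W \<sigma>"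
    by (rule extract_Y_greatest) (use \<sigma>_total F_eq in auto)
  then have Y: "extract_Y W V0 F \<alpha> W \<sigma> = W"
    using extract_Y_subset[of W V0 F \<alpha> W \<sigma>] by blast
  define H where "H = extract_graph W V0 F \<alpha> W \<sigma>"
  have "W \<subseteq> Domain H"
  proof
    fix v assume "v \<in> W"
    then consider "v \<in> own" | "v \<in> opp"
      using opp_eq by blast
    then show "v \<in> Domain H"
    proof cases
      case 1
      then show ?thesis
        using \<sigma>_total \<open>v \<in> W\<close> unfolding H_def extract_graph_def Y by blast
    next
      case 2
      then show ?thesis
        using total \<open>v \<in> W\<close> F_eq unfolding H_def extract_graph_def Y by blast
    qed
  qed
  moreover have "H `` W \<subseteq> W"
    using extract_graph_closed[of W V0 F \<alpha> W \<sigma>] unfolding H_def Y .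
  ultimately obtain u where "u \<in> W" "H `` scc H u \<subseteq> scc H u" "Restr H (scc H u) \<noteq> {}"
    using bottom_scc_exists[OF finite_W \<open>W \<noteq> {}\<close>] by blast
  then have "(scc H u, \<sigma> |` scc H u) \<in> extract_tangles W V0 F \<alpha> W \<sigma>"
    unfolding extract_tangles_iff Y H_def by blast
  then show ?thesis by blast
qed

end

section \<open>Invariants of search\<close>

lemma attr_stuck:
  assumes "\<forall>s'. \<not> attr_step W V0 F pr TT \<alpha> A (Z, \<sigma>) s'"
  shows "\<not> attr_pending W V0 F \<alpha> A Z \<sigma>"
    and "v \<in> player_vs W V0 \<alpha> \<Longrightarrow> v \<notin> Z \<Longrightarrow> (v, w) \<in> F \<Longrightarrow> w \<notin> Z"
    and "v \<in> player_vs W V0 (1 - \<alpha>) \<Longrightarrow> v \<notin> Z \<Longrightarrow> \<exists>w. (v, w) \<in> F \<and> w \<notin> Z"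
    and "(t, \<tau>) \<in> TT \<Longrightarrow> Max (pr ` t) mod 2 = \<alpha> \<Longrightarrow> \<not> t \<subseteq> Z \<Longrightarrow>
           tangle_escapes W V0 F pr t \<noteq> {} \<Longrightarrow> \<not> tangle_escapes W V0 F pr t \<subseteq> Z"
proof -
  show settled: "\<not> attr_pending W V0 F \<alpha> A Z \<sigma>"
    using assms unfolding attr_pending_def by (blast intro: attr_step.target_strat)
  show "v \<in> player_vs W V0 \<alpha> \<Longrightarrow> v \<notin> Z \<Longrightarrow> (v, w) \<in> F \<Longrightarrow> w \<notin> Z"
    using assms settled by (blast intro: attr_step.add_own)
  show "v \<in> player_vs W V0 (1 - \<alpha>) \<Longrightarrow> v \<notin> Z \<Longrightarrow> \<exists>w. (v, w) \<in> F \<and> w \<notin> Z"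
    using assms settled by (blast intro: attr_step.add_opp)
  show "(t, \<tau>) \<in> TT \<Longrightarrow> Max (pr ` t) mod 2 = \<alpha> \<Longrightarrow> \<not> t \<subseteq> Z \<Longrightarrow>
           tangle_escapes W V0 F pr t \<noteq> {} \<Longrightarrow> \<not> tangle_escapes W V0 F pr t \<subseteq> Z"
    using assms settled by (blast intro: attr_step.add_tangle)
qed

text \<open>A tangle of the attracting player would have been attracted itself; a tangle of the
  opponent escapes by a move of the attracting player, whose source would have been attracted.\<close>

lemma attr_stuck_tangle_escapes:
  assumes stuck: "\<forall>s'. \<not> attr_step W V0 F pr TT \<alpha> A (Z, \<sigma>) s'" and "\<alpha> < 2"
    and U: "(U, \<tau>) \<in> TT" "U \<subseteq> W - Z" "U \<noteq> {}" and escaping: "tangle_escapes W V0 F pr U \<noteq> {}"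
  shows "\<not> tangle_escapes W V0 F pr U \<subseteq> Z"
proof (cases "Max (pr ` U) mod 2 = \<alpha>")
  case True
  moreover have "\<not> U \<subseteq> Z"
    using U(2,3) by blast
  ultimately show ?thesis
    using attr_stuck(4)[OF stuck U(1)] escaping by blast
next
  case False
  then have "1 - Max (pr ` U) mod 2 = \<alpha>"
    using \<open>\<alpha> < 2\<close> by auto
  then obtain u w where "u \<in> U" "u \<in> player_vs W V0 \<alpha>" "(u, w) \<in> F" "w \<in> tangle_escapes W V0 F pr U"
    using escaping unfolding tangle_escapes_def by auto
  moreover from this have "w \<notin> Z"
    using attr_stuck(2)[OF stuck] U(2) by blast
  ultimately show ?thesis by blast
qed

lemma tangle_escapes_subgame:
  assumes "C \<subseteq> W" "W \<subseteq> V"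
  shows "tangle_escapes W V0 (E \<inter> W \<times> W) pr C = tangle_escapes V V0 E pr C \<inter> W"
  using assms unfolding tangle_escapes_def player_vs_def by auto

lemma sub_V_empty: "sub_V V Map.empty = V"
  by (simp add: sub_V_def)

lemma sub_V_assign: "sub_V V (\<lambda>v. if v \<in> Z then Some p else r v) = sub_V V r - Z"
  by (auto simp: sub_V_def dom_def)

lemma sub_target_nonempty:
  assumes "finite V" "sub_V V r \<noteq> {}"
  shows "sub_target V pr r \<noteq> {}"
proof -
  have "finite (sub_V V r)"
    using assms(1) by (simp add: sub_V_def)
  then have "sub_top V pr r \<in> pr ` sub_V V r"
    unfolding sub_top_def using assms(2) by simp
  then obtain v where "sub_top V pr r = pr v" "v \<in> sub_V V r"
    by (rule imageE)
  then show ?thesis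
    unfolding sub_target_def by auto
qed

definition witnessed_tangles ::
    "'v set \<Rightarrow> 'v set \<Rightarrow> ('v \<times> 'v) set \<Rightarrow> ('v \<Rightarrow> nat) \<Rightarrow> ('v set \<times> ('v \<rightharpoonup> 'v)) set \<Rightarrow> bool" where
  "witnessed_tangles V V0 E pr T \<longleftrightarrow> (\<forall>(U, \<tau>) \<in> T. tangle_witness V V0 E pr U \<tau>)"

definition total_subgame :: "'v set \<Rightarrow> ('v \<times> 'v) set \<Rightarrow> ('v \<rightharpoonup> nat) \<Rightarrow> bool" where
  "total_subgame V E r \<longleftrightarrow> (\<forall>v \<in> sub_V V r. \<exists>w \<in> sub_V V r. (v, w) \<in> E)"

text \<open>A tangle extracted from the remaining subgame has no escapes there; so if it escapes
  in the full game, this invariant shows that it is not yet known.\<close>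

definition escapes_stay ::
    "'v set \<Rightarrow> 'v set \<Rightarrow> ('v \<times> 'v) set \<Rightarrow> ('v \<Rightarrow> nat) \<Rightarrow> ('v set \<times> ('v \<rightharpoonup> 'v)) set \<Rightarrow> ('v \<rightharpoonup> nat) \<Rightarrow> bool" where
  "escapes_stay V V0 E pr T r \<longleftrightarrow> (\<forall>U \<tau>. (U, \<tau>) \<in> T \<longrightarrow> U \<subseteq> sub_V V r \<longrightarrow> U \<noteq> {} \<longrightarrow>
      tangle_escapes V V0 E pr U = {} \<or> tangle_escapes V V0 E pr U \<inter> sub_V V r \<noteq> {})"

lemma subgame_attractor_sub:
  assumes "parity_game V V0 E pr" "witnessed_tangles V V0 E pr T"
  shows "subgame_attractor V V0 E pr (sub_V V r) (sub_E V E r) (sub_top V pr r mod 2)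
           (sub_target V pr r) (sub_T V T r)"
proof
  have "finite (sub_V V r)"
    using assms(1) by (simp add: parity_game_def sub_V_def)
  then show "\<forall>a\<in>sub_target V pr r. pr a mod 2 = sub_top V pr r mod 2 \<and> (\<forall>v\<in>sub_V V r. pr v \<le> pr a)"
    unfolding sub_target_def sub_top_def by auto
  show "\<forall>(t, \<tau>) \<in> sub_T V T r. t \<subseteq> sub_V V r \<and> tangle_witness V V0 E pr t \<tau>"
    using assms(2) unfolding witnessed_tangles_def sub_T_def by auto
qed (use assms(1) in \<open>auto simp: sub_V_def sub_E_def sub_target_def\<close>)

text \<open>The last conjunct for Loop states records that a completed round has found a tangle
  that was not yet known.\<close>

definition search_inv :: "'v set \<Rightarrow> 'v set \<Rightarrow> ('v \<times> 'v) set \<Rightarrow> ('v \<Rightarrow> nat) \<Rightarrow> 'v search_state \<Rightarrow> bool" where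
  "search_inv V V0 E pr s \<longleftrightarrow> (case s of
     Loop T r Y \<Rightarrow> witnessed_tangles V V0 E pr T \<and> witnessed_tangles V V0 E pr Y \<and>
       total_subgame V E r \<and> escapes_stay V V0 E pr T r \<and> (sub_V V r = {} \<longrightarrow> \<not> Y \<subseteq> T)
   | Attr T r Y Z \<sigma> \<Rightarrow> witnessed_tangles V V0 E pr T \<and> witnessed_tangles V V0 E pr Y \<and>
       total_subgame V E r \<and> escapes_stay V V0 E pr T r \<and> sub_V V r \<noteq> {} \<and>
       subgame_attractor.attr_inv V0 pr (sub_V V r) (sub_E V E r) (sub_top V pr r mod 2)
         (sub_target V pr r) Z \<sigma>
   | Return T t \<Rightarrow> tangle_witness V V0 E pr (fst t) (snd t) \<and> tangle_escapes V V0 E pr (fst t) = {})"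

context
  fixes V V0 :: "'v set" and E :: "('v \<times> 'v) set" and pr :: "'v \<Rightarrow> nat"
  assumes game: "parity_game V V0 E pr"
begin

lemma total_subgame_next:
  assumes total: "total_subgame V E r"
    and stuck: "\<forall>s'. \<not> attr_step (sub_V V r) V0 (sub_E V E r) pr TT (sub_top V pr r mod 2) A (Z, \<sigma>) s'"
  shows "total_subgame V E (\<lambda>v. if v \<in> Z then Some p else r v)"
  unfolding total_subgame_def sub_V_assign
proof
  fix v assume v: "v \<in> sub_V V r - Z"
  show "\<exists>w \<in> sub_V V r - Z. (v, w) \<in> E"
  proof (cases "v \<in> player_vs (sub_V V r) V0 (sub_top V pr r mod 2)")
    case True
    obtain w where "w \<in> sub_V V r" "(v, w) \<in> E"
      using total v unfolding total_subgame_def by blast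
    moreover from this have "w \<notin> Z"
      using attr_stuck(2)[OF stuck True] v by (simp add: sub_E_def)
    ultimately show ?thesis by blast
  next
    case False
    then have "v \<in> player_vs (sub_V V r) V0 (1 - sub_top V pr r mod 2)"
      using v player_vs_opponent[of "sub_top V pr r mod 2" "sub_V V r" V0] by simp
    then show ?thesis
      using attr_stuck(3)[OF stuck] v by (auto simp: sub_E_def)
  qed
qed

lemma escapes_stay_next:
  assumes stay: "escapes_stay V V0 E pr T r"
    and stuck: "\<forall>s'. \<not> attr_step (sub_V V r) V0 (sub_E V E r) pr (sub_T V T r) (sub_top V pr r mod 2)
                      A (Z, \<sigma>) s'"
  shows "escapes_stay V V0 E pr T (\<lambda>v. if v \<in> Z then Some p else r v)"
  unfolding escapes_stay_def sub_V_assign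
proof (intro allI impI disjCI)
  fix U \<tau> assume U: "(U, \<tau>) \<in> T" "U \<subseteq> sub_V V r - Z" "U \<noteq> {}"
    and "\<not> tangle_escapes V V0 E pr U \<inter> (sub_V V r - Z) \<noteq> {}"
  then have into_Z: "tangle_escapes V V0 E pr U \<inter> sub_V V r \<subseteq> Z"
    by blast
  have UW: "U \<subseteq> sub_V V r" "sub_V V r \<subseteq> V"
    using U(2) by (auto simp: sub_V_def)
  have escapes_W:
      "tangle_escapes (sub_V V r) V0 (sub_E V E r) pr U = tangle_escapes V V0 E pr U \<inter> sub_V V r"
    unfolding sub_E_def using tangle_escapes_subgame[OF UW] .
  have "(U, \<tau>) \<in> sub_T V T r"
    using U(1) UW(1) unfolding sub_T_def by auto
  then have "tangle_escapes V V0 E pr U \<inter> sub_V V r = {}"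
    using attr_stuck_tangle_escapes[OF stuck _ _ U(2,3)] into_Z unfolding escapes_W by auto
  then show "tangle_escapes V V0 E pr U = {}"
    using stay U(1,3) UW(1) unfolding escapes_stay_def by blast
qed

lemma extracted_tangle_new:
  assumes "witnessed_tangles V V0 E pr T" "escapes_stay V V0 E pr T r"
    and inv: "subgame_attractor.attr_inv V0 pr (sub_V V r) (sub_E V E r) (sub_top V pr r mod 2)
                (sub_target V pr r) Z \<sigma>"
    and extracted: "(C, \<tau>) \<in> extract_tangles (sub_V V r) V0 (sub_E V E r) (sub_top V pr r mod 2) Z \<sigma>"
    and escaping: "tangle_escapes V V0 E pr C \<noteq> {}"
  shows "(C, \<tau>) \<notin> T"
proof
  assume known: "(C, \<tau>) \<in> T"
  interpret subgame_attractor V V0 E pr "sub_V V r" "sub_E V E r" "sub_top V pr r mod 2"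
      "sub_target V pr r" "sub_T V T r"
    using game assms(1) by (rule subgame_attractor_sub)
  note C = extracted_tangle[OF inv extracted]
  have "C \<subseteq> sub_V V r"
    using C(1) attr_invD(2)[OF inv] by blast
  moreover have "C \<noteq> {}"
    using extracted_tangle_witness[OF inv extracted] by (simp add: tangle_witness_def)
  ultimately have "tangle_escapes V V0 E pr C \<inter> sub_V V r \<noteq> {}"
    using assms(2) known escaping unfolding escapes_stay_def by blast
  moreover have
      "tangle_escapes (sub_V V r) V0 (sub_E V E r) pr C = tangle_escapes V V0 E pr C \<inter> sub_V V r"
    unfolding sub_E_def using tangle_escapes_subgame[OF \<open>C \<subseteq> sub_V V r\<close> W_sub] .
  ultimately show False
    using C(4) by simp
qed

text \<open>The region covers the whole subgame, so the extracted graph has a bottom component.\<close>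

lemma last_region_new_tangle:
  assumes T: "witnessed_tangles V V0 E pr T" and total: "total_subgame V E r"
    and stay: "escapes_stay V V0 E pr T r" and "sub_V V r \<noteq> {}"
    and inv: "subgame_attractor.attr_inv V0 pr (sub_V V r) (sub_E V E r) (sub_top V pr r mod 2)
                (sub_target V pr r) (sub_V V r) \<sigma>"
    and stuck: "\<forall>s'. \<not> attr_step (sub_V V r) V0 (sub_E V E r) pr (sub_T V T r) (sub_top V pr r mod 2)
                 (sub_target V pr r) (sub_V V r, \<sigma>) s'"
    and escaping: "\<forall>t \<in> extract_tangles (sub_V V r) V0 (sub_E V E r) (sub_top V pr r mod 2) (sub_V V r) \<sigma>.
                     tangle_escapes V V0 E pr (fst t) \<noteq> {}"
  shows "\<not> extract_tangles (sub_V V r) V0 (sub_E V E r) (sub_top V pr r mod 2) (sub_V V r) \<sigma> \<subseteq> T"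
proof -
  interpret subgame_attractor V V0 E pr "sub_V V r" "sub_E V E r" "sub_top V pr r mod 2"
      "sub_target V pr r" "sub_T V T r"
    using game T by (rule subgame_attractor_sub)
  obtain C \<tau> where
    C: "(C, \<tau>) \<in> extract_tangles (sub_V V r) V0 (sub_E V E r) (sub_top V pr r mod 2) (sub_V V r) \<sigma>"
    using extract_tangles_nonempty[OF inv attr_stuck(1)[OF stuck] \<open>sub_V V r \<noteq> {}\<close>] total
    unfolding total_subgame_def by auto
  moreover have "(C, \<tau>) \<notin> T"
    using extracted_tangle_new[OF T stay inv C] escaping C by fastforce
  ultimately show ?thesis by blast
qed

lemma total_subgame_empty: "total_subgame V E Map.empty"
  using game unfolding total_subgame_def sub_V_empty parity_game_def by blast

lemma escapes_stay_empty: "escapes_stay V V0 E pr T Map.empty"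
  using game unfolding escapes_stay_def sub_V_empty tangle_escapes_def parity_game_def by blast

lemma search_inv_init:
  "V \<noteq> {} \<Longrightarrow> witnessed_tangles V V0 E pr T \<Longrightarrow> search_inv V V0 E pr (Loop T Map.empty {})"
  unfolding search_inv_def
  by (simp add: total_subgame_empty escapes_stay_empty sub_V_empty witnessed_tangles_def)

lemma search_inv_step:
  assumes "V \<noteq> {}" and inv: "search_inv V V0 E pr s" and step: "search_step V V0 E pr s s'"
  shows "search_inv V V0 E pr s'"
  using step
proof cases
  case (loop_enter r T Y)
  interpret subgame_attractor V V0 E pr "sub_V V r" "sub_E V E r" "sub_top V pr r mod 2"
      "sub_target V pr r" "sub_T V T r"
    using game inv loop_enter(1) unfolding search_inv_def by (intro subgame_attractor_sub) auto
  show ?thesis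
    using inv loop_enter attr_inv_init unfolding search_inv_def by simp
next
  case (loop_done r T Y)
  then show ?thesis
    using inv \<open>V \<noteq> {}\<close> total_subgame_empty escapes_stay_empty
    unfolding search_inv_def witnessed_tangles_def by (auto simp: sub_V_empty)
next
  case (attr r T Z \<sigma> Z' \<sigma>' Y)
  interpret subgame_attractor V V0 E pr "sub_V V r" "sub_E V E r" "sub_top V pr r mod 2"
      "sub_target V pr r" "sub_T V T r"
    using game inv attr(1) unfolding search_inv_def by (intro subgame_attractor_sub) auto
  show ?thesis
    using inv attr attr_inv_step unfolding search_inv_def by auto
next
  case (attr_return r T Z \<sigma> t Y)
  interpret subgame_attractor V V0 E pr "sub_V V r" "sub_E V E r" "sub_top V pr r mod 2"
      "sub_target V pr r" "sub_T V T r"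
    using game inv attr_return(1) unfolding search_inv_def by (intro subgame_attractor_sub) auto
  have "subgame_attractor.attr_inv V0 pr (sub_V V r) (sub_E V E r) (sub_top V pr r mod 2)
      (sub_target V pr r) Z \<sigma>"
    using inv attr_return(1) unfolding search_inv_def by simp
  then show ?thesis
    using attr_return extracted_tangle_witness[of Z \<sigma> "fst t" "snd t"]
    unfolding search_inv_def by simp
next
  case (attr_next r T Z \<sigma> Y)
  define X where "X = extract_tangles (sub_V V r) V0 (sub_E V E r) (sub_top V pr r mod 2) Z \<sigma>"
  define r' where "r' = (\<lambda>v. if v \<in> Z then Some (sub_top V pr r) else r v)"
  have T: "witnessed_tangles V V0 E pr T" and Y: "witnessed_tangles V V0 E pr Y"
    and total: "total_subgame V E r" and stay: "escapes_stay V V0 E pr T r"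
    and "sub_V V r \<noteq> {}"
    and ainv: "subgame_attractor.attr_inv V0 pr (sub_V V r) (sub_E V E r) (sub_top V pr r mod 2)
      (sub_target V pr r) Z \<sigma>"
    using inv attr_next(1) unfolding search_inv_def by simp_all
  interpret subgame_attractor V V0 E pr "sub_V V r" "sub_E V E r" "sub_top V pr r mod 2"
      "sub_target V pr r" "sub_T V T r"
    using game T by (rule subgame_attractor_sub)
  have "witnessed_tangles V V0 E pr (Y \<union> X)"
    using Y extracted_tangle_witness[OF ainv] unfolding witnessed_tangles_def X_def by blast
  moreover have "total_subgame V E r'"
    unfolding r'_def using total attr_next(3) by (rule total_subgame_next)
  moreover have "escapes_stay V V0 E pr T r'"
    unfolding r'_def using stay attr_next(3) by (rule escapes_stay_next)
  moreover have "\<not> Y \<union> X \<subseteq> T" if "sub_V V r' = {}"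
  proof -
    have "Z = sub_V V r"
      using that attr_invD(2)[OF ainv] unfolding r'_def sub_V_assign by blast
    then show ?thesis
      using last_region_new_tangle[OF T total stay \<open>sub_V V r \<noteq> {}\<close>] ainv attr_next(3,4)
      unfolding X_def by blast
  qed
  ultimately show ?thesis
    using attr_next(2) T unfolding search_inv_def r'_def X_def by simp
qed

end

section \<open>Termination of search\<close>

lemma attr_step_grows:
  assumes "attr_step W V0 F pr TT \<alpha> A (Z, \<sigma>) (Z', \<sigma>')"
  shows "Z \<subseteq> Z' \<and> dom \<sigma> \<subseteq> dom \<sigma>' \<and> (Z \<subset> Z' \<or> dom \<sigma> \<subset> dom \<sigma>')"
  using assms
proof cases
  case (add_tangle t \<tau>)
  then have "dom \<sigma> \<subseteq> dom \<sigma>'"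
    by (auto simp: dom_def)
  then show ?thesis
    using add_tangle by auto
qed auto

lemma Return_final: "\<not> search_step V V0 E pr (Return T t) s"
  by (auto elim: search_step.cases)

lemma search_progress:
  assumes "\<nexists>s'. search_step V V0 E pr s s'"
  shows "\<exists>T t. s = Return T t"
proof (cases s)
  case (Loop T r Y)
  then show ?thesis
    using assms search_step.loop_enter search_step.loop_done by (cases "sub_V V r = {}") blast+
next
  case (Attr T r Y Z \<sigma>)
  then have stuck: "\<forall>s'. \<not> attr_step (sub_V V r) V0 (sub_E V E r) pr (sub_T V T r)
                 (sub_top V pr r mod 2) (sub_target V pr r) (Z, \<sigma>) s'"
    using assms search_step.attr by (metis surj_pair)
  show ?thesis
  proof (cases "\<exists>t \<in> extract_tangles (sub_V V r) V0 (sub_E V E r) (sub_top V pr r mod 2) Z \<sigma>.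
                  tangle_escapes V V0 E pr (fst t) = {}")
    case True
    then show ?thesis
      using assms Attr search_step.attr_return[OF stuck] by blast
  next
    case False
    then show ?thesis
      using assms Attr search_step.attr_next[OF stuck] by blast
  qed
qed simp

definition witness_candidates :: "'v set \<Rightarrow> ('v set \<times> ('v \<rightharpoonup> 'v)) set" where
  "witness_candidates V = Pow V \<times> {m. dom m \<subseteq> V \<and> ran m \<subseteq> V}"

lemma finite_witness_candidates:
  fixes V :: "'v set"
  assumes "finite V"
  shows "finite (witness_candidates V)"
proof -
  have "{m :: 'v \<rightharpoonup> 'v. dom m \<subseteq> V \<and> ran m \<subseteq> V} = (\<Union>D \<in> Pow V. {m. dom m = D \<and> ran m \<subseteq> V})"
    by auto
  also have "finite \<dots>"
    using assms by (intro finite_UN_I finite_set_of_finite_maps) (auto intro: finite_subset)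
  finally show ?thesis
    using assms unfolding witness_candidates_def by simp
qed

lemma witnessed_tangles_candidates:
  "witnessed_tangles V V0 E pr T \<Longrightarrow> T \<subseteq> witness_candidates V"
  unfolding witnessed_tangles_def witness_candidates_def tangle_witness_def Let_def by fastforce

fun known_tangles :: "'v search_state \<Rightarrow> ('v set \<times> ('v \<rightharpoonup> 'v)) set" where
  "known_tangles (Loop T r Y) = T"
| "known_tangles (Attr T r Y Z \<sigma>) = T"
| "known_tangles (Return T t) = T"

fun round_size :: "'v set \<Rightarrow> 'v search_state \<Rightarrow> nat" where
  "round_size V (Loop T r Y) = 2 * card (sub_V V r) + 1"
| "round_size V (Attr T r Y Z \<sigma>) = 2 * card (sub_V V r)"
| "round_size V (Return T t) = 0"

fun attractor_size :: "'v set \<Rightarrow> 'v search_state \<Rightarrow> nat" where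
  "attractor_size V (Attr T r Y Z \<sigma>) = (card V - card Z) + (card V - card (dom \<sigma>))"
| "attractor_size V _ = 0"

text \<open>Each round adds a new tangle; within a round every region removes vertices from the
  subgame; within a region the attractor or its strategy grows.\<close>

definition search_measure :: "'v set \<Rightarrow> ('v search_state \<times> 'v search_state) set" where
  "search_measure V = measures
     [\<lambda>s. card (witness_candidates V) - card (known_tangles s), round_size V, attractor_size V]"

context
  fixes V V0 :: "'v set" and E :: "('v \<times> 'v) set" and pr :: "'v \<Rightarrow> nat"
  assumes game: "parity_game V V0 E pr"
begin

lemma finite_V: "finite V"
  using game by (simp add: parity_game_def)

lemma search_step_decreases:
  assumes inv: "search_inv V V0 E pr s" and inv': "search_inv V V0 E pr s'"
    and step: "search_step V V0 E pr s s'" and not_final: "\<forall>T t. s' \<noteq> Return T t"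
  shows "(s', s) \<in> search_measure V"
  using step
proof cases
  case (loop_enter r T Y)
  then show ?thesis
    unfolding search_measure_def by simp
next
  case (loop_done r T Y)
  have "witnessed_tangles V V0 E pr T" "witnessed_tangles V V0 E pr Y"
    using inv loop_done(1) unfolding search_inv_def by auto
  then have "T \<union> Y \<subseteq> witness_candidates V"
    using witnessed_tangles_candidates by blast
  moreover have "T \<subset> T \<union> Y"
    using inv loop_done unfolding search_inv_def by auto
  ultimately have "card T < card (T \<union> Y)" "card (T \<union> Y) \<le> card (witness_candidates V)"
    using finite_witness_candidates[OF finite_V]
    by (auto intro: psubset_card_mono card_mono finite_subset)
  then show ?thesis
    using loop_done unfolding search_measure_def by simp
next
  case (attr r T Z \<sigma> Z' \<sigma>' Y)
  interpret subgame_attractor V V0 E pr "sub_V V r" "sub_E V E r" "sub_top V pr r mod 2"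
      "sub_target V pr r" "sub_T V T r"
    using game inv attr(1) unfolding search_inv_def by (intro subgame_attractor_sub) auto
  have "Z' \<subseteq> V" "dom \<sigma>' \<subseteq> V"
    using inv' attr(2) attr_invD(2,3)[of Z' \<sigma>'] unfolding search_inv_def sub_V_def by auto
  then have fin: "finite Z'" "finite (dom \<sigma>')"
    using finite_subset[OF _ finite_V] by blast+
  have grows: "Z \<subseteq> Z'" "dom \<sigma> \<subseteq> dom \<sigma>'" "Z \<subset> Z' \<or> dom \<sigma> \<subset> dom \<sigma>'"
    using attr_step_grows[OF attr(3)] by blast+
  have "card Z' \<le> card V" "card (dom \<sigma>') \<le> card V"
    using card_mono[OF finite_V \<open>Z' \<subseteq> V\<close>] card_mono[OF finite_V \<open>dom \<sigma>' \<subseteq> V\<close>] .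
  moreover have "card Z \<le> card Z'" "card (dom \<sigma>) \<le> card (dom \<sigma>')"
    using card_mono[OF fin(1) grows(1)] card_mono[OF fin(2) grows(2)] .
  moreover have "card Z < card Z' \<or> card (dom \<sigma>) < card (dom \<sigma>')"
    using grows(3) psubset_card_mono[OF fin(1)] psubset_card_mono[OF fin(2)] by blast
  ultimately show ?thesis
    using attr unfolding search_measure_def by simp linarith

next
  case (attr_return r T Z \<sigma> t Y)
  then show ?thesis
    using not_final by simp
next
  case (attr_next r T Z \<sigma> Y)
  interpret subgame_attractor V V0 E pr "sub_V V r" "sub_E V E r" "sub_top V pr r mod 2"
      "sub_target V pr r" "sub_T V T r"
    using game inv attr_next(1) unfolding search_inv_def by (intro subgame_attractor_sub) auto
  have "sub_target V pr r \<subseteq> Z" "sub_V V r \<noteq> {}"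
    using inv attr_next(1) attr_invD(1) unfolding search_inv_def by auto
  then have "sub_V V r - Z \<subset> sub_V V r"
    using sub_target_nonempty[OF finite_V] A_sub by blast
  then have "card (sub_V V r - Z) < card (sub_V V r)"
    using finite_V by (auto intro: psubset_card_mono simp: sub_V_def)
  then show ?thesis
    using attr_next unfolding search_measure_def by (simp add: sub_V_assign)
qed

lemma search_terminates:
  assumes "V \<noteq> {}" "search_inv V V0 E pr s"
  shows "\<nexists>f. f 0 = s \<and> (\<forall>i. search_step V V0 E pr (f i) (f (Suc i)))"
proof
  assume "\<exists>f. f 0 = s \<and> (\<forall>i. search_step V V0 E pr (f i) (f (Suc i)))"
  then obtain f where f: "f 0 = s" "\<And>i. search_step V V0 E pr (f i) (f (Suc i))"
    by blast
  have inv: "search_inv V V0 E pr (f i)" for i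
    by (induction i) (use assms(2) f search_inv_step[OF game assms(1)] in auto)
  have "\<forall>T t. f (Suc i) \<noteq> Return T t" for i
    using f(2)[of "Suc i"] Return_final by metis
  then have "(f (Suc i), f i) \<in> search_measure V" for i
    using search_step_decreases inv f(2) by blast
  then show False
    using wf_measures unfolding search_measure_def wf_iff_no_infinite_down_chain by blast
qed

end

theorem lemma9:
  fixes V V0 :: "'v set" and E :: "('v \<times> 'v) set" and pr :: "'v \<Rightarrow> nat"
    and T :: "('v set \<times> ('v \<rightharpoonup> 'v)) set"
  assumes "parity_game V V0 E pr"
    and "V \<noteq> {}"
    and "finite T"
    and "\<forall>(U, \<tau>) \<in> T. tangle_witness V V0 E pr U \<tau>"
  shows "\<not> (\<exists>f. f 0 = Loop T Map.empty {} \<and> (\<forall>i. search_step V V0 E pr (f i) (f (Suc i))))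
    \<and> (\<forall>s. (search_step V V0 E pr)\<^sup>*\<^sup>* (Loop T Map.empty {}) s \<and> \<not> (\<exists>s'. search_step V V0 E pr s s')
          \<longrightarrow> (\<exists>T'' t. s = Return T'' t \<and> is_tangle V V0 E pr (fst t)
                     \<and> dominion V V0 E pr (Max (pr ` fst t) mod 2) (fst t)))"
proof -
  note game = assms(1) and nonempty = assms(2)
  have init: "search_inv V V0 E pr (Loop T Map.empty {})"
    using search_inv_init[OF game nonempty] assms(4) unfolding witnessed_tangles_def .
  have result: "\<exists>T'' t. s = Return T'' t \<and> is_tangle V V0 E pr (fst t)
                  \<and> dominion V V0 E pr (Max (pr ` fst t) mod 2) (fst t)"
    if reachable: "(search_step V V0 E pr)\<^sup>*\<^sup>* (Loop T Map.empty {}) s"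
      and final: "\<nexists>s'. search_step V V0 E pr s s'" for s
  proof -
    obtain T'' t where s: "s = Return T'' t"
      using search_progress[OF final] by blast
    have "search_inv V V0 E pr s"
      using reachable by induction (use init search_inv_step[OF game nonempty] in auto)
    then have "tangle_witness V V0 E pr (fst t) (snd t)" "tangle_escapes V V0 E pr (fst t) = {}"
      unfolding s search_inv_def by simp_all
    then show ?thesis
      using s tangle_dominion[OF game] unfolding is_tangle_def by blast
  qed
  then show ?thesis
    using search_terminates[OF game nonempty init] by blast
qed

end
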